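(* $\mathcal R$ is a finite-length abelian category, and hence every rational $\mathfrak{sl}(2)$-module has Jordan–Hölder filtrations by rational submodules. Moreover, $\mathcal R$ is a Krull–Schmidt category, and therefore every rational module has a Remak decomposition into a finite direct sum of indecomposable rational modules, unique up to reordering of the direct summands (and isomorphism).
   Context: $\mathfrak{sl}(2)$ has basis $L_{-1}=f$, $L_0=-\tfrac12 h$, $L_1=-e$ for a Chevalley basis $e,f,h$. Every $\mathfrak{sl}(2)$-module $(V,\rho)$ is a $\mathbb{C}[z]$-module via $z\cdot v=\rho(L_0)v$. A rational $\mathfrak{sl}(2)$-module is one which, with this structure, is a finite-dimensional $\mathbb{C}(z)$-vector space. $\mathcal R$ denotes the full subcategory of the category of $\mathfrak{sl}(2)$-modules formed by rational modules (morphisms are $\mathfrak{sl}(2)$-homomorphisms, automatically $\mathbb{C}(z)$-linear); it is an abelian $\mathbb{C}$-linear category. *)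

theory Defs
  imports "HOL-Analysis.Analysis" "HOL-Computational_Algebra.Polynomial"
begin

definition sl2_module ::
  "(complex \<Rightarrow> 'v::ab_group_add \<Rightarrow> 'v) \<Rightarrow> 'v set \<Rightarrow> ('v \<Rightarrow> 'v) \<Rightarrow> ('v \<Rightarrow> 'v) \<Rightarrow> ('v \<Rightarrow> 'v) \<Rightarrow> bool"
  where "sl2_module smul V e f h \<longleftrightarrow>
     module.subspace smul V \<and>
     (\<forall>x\<in>{e, f, h}. (\<forall>v\<in>V. x v \<in> V) \<and>
         (\<forall>u\<in>V. \<forall>v\<in>V. x (u + v) = x u + x v) \<and>
         (\<forall>c. \<forall>v\<in>V. x (smul c v) = smul c (x v))) \<and>
     (\<forall>v\<in>V. h (e v) - e (h v) = smul 2 (e v)) \<and>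
     (\<forall>v\<in>V. h (f v) - f (h v) = smul (-2) (f v)) \<and>
     (\<forall>v\<in>V. e (f v) - f (e v) = h v)"

text \<open>L_0 = -h/2, and the resulting C[z]-module structure z.v = L_0 v.\<close>

definition L0 :: "(complex \<Rightarrow> 'v \<Rightarrow> 'v) \<Rightarrow> ('v \<Rightarrow> 'v) \<Rightarrow> 'v \<Rightarrow> 'v"
  where "L0 smul h = (\<lambda>v. smul (- 1 / 2) (h v))"

definition polyact :: "(complex \<Rightarrow> 'v::ab_group_add \<Rightarrow> 'v) \<Rightarrow> ('v \<Rightarrow> 'v) \<Rightarrow> complex poly \<Rightarrow> 'v \<Rightarrow> 'v"
  where "polyact smul h p v = (\<Sum>i\<le>degree p. smul (coeff p i) ((L0 smul h ^^ i) v))"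

text \<open>Rational module: the C[z]-module structure extends (necessarily uniquely) to a
 C(z)-vector space structure, i.e. every nonzero polynomial in L_0 acts bijectively,
 and this C(z)-vector space is finite dimensional, i.e. there is a finite set S such
 that every v is a C(z)-linear combination of S: p(L_0) v = sum_s c_s(L_0) s for some p \<noteq> 0.\<close>

definition rational_module ::
  "(complex \<Rightarrow> 'v::ab_group_add \<Rightarrow> 'v) \<Rightarrow> 'v set \<Rightarrow> ('v \<Rightarrow> 'v) \<Rightarrow> ('v \<Rightarrow> 'v) \<Rightarrow> ('v \<Rightarrow> 'v) \<Rightarrow> bool"
  where "rational_module smul V e f h \<longleftrightarrow>
     sl2_module smul V e f h \<and>
     (\<forall>p. p \<noteq> 0 \<longrightarrow> bij_betw (polyact smul h p) V V) \<and>
     (\<exists>S. finite S \<and> S \<subseteq> V \<and>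
        (\<forall>v\<in>V. \<exists>p c. p \<noteq> 0 \<and> polyact smul h p v = (\<Sum>s\<in>S. polyact smul h (c s) s)))"

definition rational_submodule where
  "rational_submodule smul W V e f h \<longleftrightarrow> W \<subseteq> V \<and> rational_module smul W e f h"

text \<open>Jordan--Hoelder filtration of V in R: 0 = V_0 < V_1 < ... < V_n = V by rational
 submodules with each V_{i+1}/V_i simple in R, i.e. no rational submodule strictly between.\<close>

definition jordan_hoelder_filtration ::
  "(complex \<Rightarrow> 'v::ab_group_add \<Rightarrow> 'v) \<Rightarrow> 'v set \<Rightarrow> ('v \<Rightarrow> 'v) \<Rightarrow> ('v \<Rightarrow> 'v) \<Rightarrow> ('v \<Rightarrow> 'v)
    \<Rightarrow> (nat \<Rightarrow> 'v set) \<Rightarrow> nat \<Rightarrow> bool" where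
  "jordan_hoelder_filtration smul V e f h Vs n \<longleftrightarrow>
     Vs 0 = {0} \<and> Vs n = V \<and>
     (\<forall>i\<le>n. rational_submodule smul (Vs i) V e f h) \<and>
     (\<forall>i<n. Vs i \<subset> Vs (Suc i) \<and>
        \<not> (\<exists>U. rational_submodule smul U V e f h \<and> Vs i \<subset> U \<and> U \<subset> Vs (Suc i)))"

definition direct_sum_decomp ::
  "(complex \<Rightarrow> 'v::ab_group_add \<Rightarrow> 'v) \<Rightarrow> 'v set \<Rightarrow> ('v \<Rightarrow> 'v) \<Rightarrow> ('v \<Rightarrow> 'v) \<Rightarrow> ('v \<Rightarrow> 'v)
    \<Rightarrow> (nat \<Rightarrow> 'v set) \<Rightarrow> nat \<Rightarrow> bool" where
  "direct_sum_decomp smul V e f h Ws n \<longleftrightarrow>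
     (\<forall>i<n. rational_submodule smul (Ws i) V e f h) \<and>
     (\<forall>v\<in>V. \<exists>!w. (\<forall>i<n. w i \<in> Ws i) \<and> (\<forall>i\<ge>n. w i = 0) \<and> v = (\<Sum>i<n. w i))"

definition indecomposable where
  "indecomposable smul W e f h \<longleftrightarrow>
     rational_module smul W e f h \<and> W \<noteq> {0} \<and>
     \<not> (\<exists>Ws. direct_sum_decomp smul W e f h Ws 2 \<and> Ws 0 \<noteq> {0} \<and> Ws 1 \<noteq> {0})"

definition sl2_hom where
  "sl2_hom smul W U e f h \<phi> \<longleftrightarrow>
     (\<forall>v\<in>W. \<phi> v \<in> U) \<and>
     (\<forall>u\<in>W. \<forall>v\<in>W. \<phi> (u + v) = \<phi> u + \<phi> v) \<and>
     (\<forall>c. \<forall>v\<in>W. \<phi> (smul c v) = smul c (\<phi> v)) \<and>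
     (\<forall>x\<in>{e, f, h}. \<forall>v\<in>W. \<phi> (x v) = x (\<phi> v))"

definition sl2_iso where
  "sl2_iso smul W U e f h \<longleftrightarrow> (\<exists>\<phi>. sl2_hom smul W U e f h \<phi> \<and> bij_betw \<phi> W U)"

text \<open>The endomorphism ring End_R(W) is local: W \<noteq> 0 and the non-units are closed
 under addition (units of End_R(W) are the bijective endomorphisms).\<close>

definition local_endomorphism_ring where
  "local_endomorphism_ring smul W e f h \<longleftrightarrow> W \<noteq> {0} \<and>
     (\<forall>\<phi> \<psi>. sl2_hom smul W W e f h \<phi> \<and> sl2_hom smul W W e f h \<psi> \<and>
        \<not> bij_betw \<phi> W W \<and> \<not> bij_betw \<psi> W W \<longrightarrow>
        \<not> bij_betw (\<lambda>v. \<phi> v + \<psi> v) W W)"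

end

theory Submission
  imports Defs "HOL-Computational_Algebra.Fraction_Field" "HOL-Library.Function_Algebras"
begin

text \<open>A rational module is a finite-dimensional vector space over \<open>\<complex>(z)\<close>, with \<open>z\<close> acting
  as \<open>L\<^sub>0\<close>, and its rational submodules are \<open>\<complex>(z)\<close>-subspaces. Measuring them by the
  \<open>\<complex>(z)\<close>-dimension, i.e. the maximal size of a set that is independent over \<open>\<complex>[z]\<close>, a strict
  inclusion of rational submodules strictly increases the dimension, because a rational submodule
  is divisible. So every chain of rational submodules is finite: Jordan--Hoelder filtrations and
  decompositions into indecomposables exist by induction on the dimension, and the kernels and
  images of the powers of an endomorphism stabilise. The latter is Fitting's lemma: an
  endomorphism of an indecomposable module is invertible or nilpotent, so its endomorphism ring
  is local. Uniqueness is the Krull--Schmidt exchange argument. The identity of the first summand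
  \<open>W\<^sub>0\<close> of one decomposition is the sum of its factorisations through the summands \<open>U\<^sub>j\<close>
  of the other, so by locality one composite \<open>W\<^sub>0 \<rightarrow> U\<^sub>j \<rightarrow> W\<^sub>0\<close> is invertible; then
  \<open>W\<^sub>0 \<cong> U\<^sub>j\<close>, the complements are isomorphic too, and induction on the number of summands
  finishes the proof.\<close>

lemma sum_fun_apply: "(\<Sum>i\<in>A. g i) x = (\<Sum>i\<in>A. g i x)"
  by (induction A rule: infinite_finite_induct) auto

lemma sum_Fract_1: "(\<Sum>t\<in>A. Fract (g t) 1) = Fract (\<Sum>t\<in>A. g t) (1::'a::idom)"
  by (induction A rule: infinite_finite_induct) (simp_all add: Zero_fract_def)

lemma sum_Fract_eq_0_imp:
  fixes a b :: "'i \<Rightarrow> 'a::idom"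
  assumes T: "finite T" and b: "\<And>t. t \<in> T \<Longrightarrow> b t \<noteq> 0" and sum0: "(\<Sum>t\<in>T. Fract (a t) (b t)) = 0"
  shows "(\<Sum>t\<in>T. a t * (\<Prod>t'\<in>T - {t}. b t')) = 0"
proof -
  have "Fract (\<Prod>t'\<in>T. b t') 1 * Fract (a t) (b t) = Fract (a t * (\<Prod>t'\<in>T - {t}. b t')) 1"
    if t: "t \<in> T" for t
    using mult_fract_cancel[OF b[OF t], of "a t * (\<Prod>t'\<in>T - {t}. b t')" 1]
    by (simp add: prod.remove[OF T t] ac_simps)
  then have "Fract (\<Prod>t'\<in>T. b t') 1 * (\<Sum>t\<in>T. Fract (a t) (b t))
      = (\<Sum>t\<in>T. Fract (a t * (\<Prod>t'\<in>T - {t}. b t')) 1)"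
    by (simp add: sum_distrib_left)
  also have "\<dots> = Fract (\<Sum>t\<in>T. a t * (\<Prod>t'\<in>T - {t}. b t')) 1"
    by (rule sum_Fract_1)
  finally show ?thesis using sum0 by (simp add: Zero_fract_def eq_fract)
qed

lemma card_independent_functions_le:
  fixes X :: "('s \<Rightarrow> 'k::field) set"
  assumes S: "finite S" and X: "finite X"
    and indep: "\<And>g. (\<Sum>x\<in>X. (\<lambda>s. g x * x s)) = 0 \<Longrightarrow> \<forall>x\<in>X. g x = 0"
    and supp: "\<And>x s. x \<in> X \<Longrightarrow> s \<notin> S \<Longrightarrow> x s = 0"
  shows "card X \<le> card S"
proof -
  interpret F: vector_space "\<lambda>c x s. c * x s :: 'k"
    by unfold_locales (auto simp: algebra_simps)
  have ind: "F.independent X" using indep by (intro F.independent_if_scalars_zero[OF X]) blast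
  define delta :: "'s \<Rightarrow> 's \<Rightarrow> 'k" where "delta s s' = (if s' = s then 1 else 0)" for s s'
  have "x = (\<Sum>s\<in>S. (\<lambda>s'. x s * delta s s'))" if x: "x \<in> X" for x
  proof
    fix s'
    have "(\<Sum>s\<in>S. x s * delta s s') = (\<Sum>s\<in>S. if s = s' then x s else 0)"
      by (intro sum.cong) (auto simp: delta_def)
    then show "x s' = (\<Sum>s\<in>S. (\<lambda>s'. x s * delta s s')) s'"
      using S supp[OF x, of s'] by (simp add: sum_fun_apply)
  qed
  also have "(\<Sum>s\<in>S. (\<lambda>s'. x s * delta s s')) \<in> F.span (delta ` S)" for x
    by (intro F.span_sum F.span_scale[of "delta _" _ "x _", simplified] F.span_base) auto
  finally have "X \<subseteq> F.span (delta ` S)" by blast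
  then have "card X \<le> card (delta ` S)" using F.independent_span_bound[OF _ ind] S by blast
  also have "\<dots> \<le> card S" using S card_image_le by blast
  finally show ?thesis .
qed

lemma card_le_if_coordinates_independent:
  fixes a :: "'i \<Rightarrow> 's \<Rightarrow> 'k::field"
  assumes S: "finite S" and T: "finite T"
    and indep: "\<And>lam. (\<And>s. s \<in> S \<Longrightarrow> (\<Sum>t\<in>T. lam t * a t s) = 0) \<Longrightarrow> \<forall>t\<in>T. lam t = 0"
  shows "card T \<le> card S"
proof -
  define a' where "a' t s = (if s \<in> S then a t s else 0)" for t s
  have indep': "\<forall>t\<in>T. lam t = 0" if sum0: "(\<Sum>t\<in>T. (\<lambda>s. lam t * a' t s)) = 0" for lam
  proof (rule indep)
    fix s assume "s \<in> S"
    then show "(\<Sum>t\<in>T. lam t * a t s) = 0" using fun_cong[OF sum0, of s] by (simp add: sum_fun_apply a'_def)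
  qed
  have inj: "inj_on a' T"
  proof (rule inj_onI, rule ccontr)
    fix t1 t2 assume t: "t1 \<in> T" "t2 \<in> T" "a' t1 = a' t2" "t1 \<noteq> t2"
    define lam :: "'i \<Rightarrow> 'k" where "lam t = (if t = t1 then 1 else if t = t2 then -1 else 0)" for t
    have "(\<Sum>t\<in>T. (\<lambda>s. lam t * a' t s)) = (\<Sum>t\<in>{t1, t2}. (\<lambda>s. lam t * a' t s))"
      using t T by (intro sum.mono_neutral_right) (auto simp: lam_def fun_eq_iff)
    also have "\<dots> = 0" using t by (simp add: lam_def fun_eq_iff)
    finally have "lam t1 = 0" using indep' t by blast
    then show False by (simp add: lam_def)
  qed
  have "card (a' ` T) \<le> card S"
  proof (rule card_independent_functions_le[OF S])
    fix g assume "(\<Sum>x\<in>a' ` T. (\<lambda>s. g x * x s)) = 0"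
    then have "(\<Sum>t\<in>T. (\<lambda>s. g (a' t) * a' t s)) = 0" by (simp add: sum.reindex[OF inj])
    then show "\<forall>x\<in>a' ` T. g x = 0" using indep'[of "\<lambda>t. g (a' t)"] by auto
  qed (use T in \<open>auto simp: a'_def\<close>)
  then show ?thesis using card_image[OF inj] by simp
qed

definition linear_into :: "('a \<Rightarrow> 'v::ab_group_add \<Rightarrow> 'v) \<Rightarrow> 'v set \<Rightarrow> 'v set \<Rightarrow> ('v \<Rightarrow> 'v) \<Rightarrow> bool"
  where "linear_into smul V W g \<longleftrightarrow> (\<forall>v\<in>V. g v \<in> W) \<and>
     (\<forall>u\<in>V. \<forall>v\<in>V. g (u + v) = g u + g v) \<and> (\<forall>c. \<forall>v\<in>V. g (smul c v) = smul c (g v))"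

lemma linear_intoD:
  assumes "linear_into smul V W g"
  shows "v \<in> V \<Longrightarrow> g v \<in> W" "u \<in> V \<Longrightarrow> v \<in> V \<Longrightarrow> g (u + v) = g u + g v"
    "v \<in> V \<Longrightarrow> g (smul c v) = smul c (g v)"
  using assms unfolding linear_into_def by auto

lemma linear_into_funpow: "linear_into smul V V g \<Longrightarrow> linear_into smul V V (g ^^ n)"
  by (induction n) (auto simp: linear_into_def)

lemma linear_into_restrict:
  "linear_into smul V V g \<Longrightarrow> U \<subseteq> V \<Longrightarrow> (\<And>v. v \<in> U \<Longrightarrow> g v \<in> U) \<Longrightarrow> linear_into smul U U g"
  unfolding linear_into_def by (auto simp: subset_iff)

context vector_space
begin

context
  fixes V W g
  assumes V: "subspace V" and g: "linear_into scale V W g"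
begin

lemma linear_into_0: "g 0 = 0"
  using linear_intoD(2)[OF g subspace_0[OF V] subspace_0[OF V]] by simp

lemma linear_into_diff: "u \<in> V \<Longrightarrow> v \<in> V \<Longrightarrow> g (u - v) = g u - g v"
  using linear_intoD(2)[OF g, of "u - v" v] subspace_diff[OF V] by (simp add: algebra_simps)

lemma linear_into_sum: "(\<And>i. i \<in> A \<Longrightarrow> x i \<in> V) \<Longrightarrow> g (\<Sum>i\<in>A. x i) = (\<Sum>i\<in>A. g (x i))"
proof (induction A rule: infinite_finite_induct)
  case (insert a A)
  then show ?case using linear_intoD(2)[OF g] subspace_sum[OF V, of A x] by simp
qed (simp_all add: linear_into_0)

lemma linear_into_inj_on: "(\<And>v. v \<in> V \<Longrightarrow> g v = 0 \<Longrightarrow> v = 0) \<Longrightarrow> inj_on g V"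
  using linear_into_diff subspace_diff[OF V] by (intro inj_onI) force

end

end

locale sl2_operators = vector_space smul for smul :: "complex \<Rightarrow> 'v::ab_group_add \<Rightarrow> 'v" +
  fixes e f h :: "'v \<Rightarrow> 'v"
begin

abbreviation act :: "complex poly \<Rightarrow> 'v \<Rightarrow> 'v" where "act \<equiv> polyact smul h"

lemma linear_into_L0: "subspace V \<Longrightarrow> linear_into smul V V h \<Longrightarrow> linear_into smul V V (L0 smul h)"
  unfolding linear_into_def L0_def
  by (auto simp: subspace_scale subspace_neg scale_right_distrib scale_left_commute)

lemma act_eq_sum_lessThan:
  "degree p < N \<Longrightarrow> act p v = (\<Sum>i<N. smul (coeff p i) ((L0 smul h ^^ i) v))"
  unfolding polyact_def by (intro sum.mono_neutral_left) (auto simp: coeff_eq_0)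

lemma act_add: "act (p + q) v = act p v + act q v"
proof -
  define N where "N = Suc (max (degree p) (degree q))"
  have "degree (p + q) < N" "degree p < N" "degree q < N"
    unfolding N_def using degree_add_le_max[of p q] by auto
  then show ?thesis by (simp add: act_eq_sum_lessThan scale_left_distrib sum.distrib)
qed

lemma act_0: "act 0 v = 0"
  by (simp add: polyact_def)

lemma act_sum: "act (\<Sum>i\<in>A. p i) v = (\<Sum>i\<in>A. act (p i) v)"
  by (induction A rule: infinite_finite_induct) (simp_all add: act_add act_0)

lemma act_uminus: "act (- p) v = - act p v"
  using act_add[of p "- p" v] by (simp add: polyact_def eq_neg_iff_add_eq_0 add.commute)

lemma act_1: "act 1 v = v"
  by (simp add: polyact_def)

lemma act_smult: "act (smult a p) v = smul a (act p v)"
  unfolding polyact_def by (cases "a = 0") (simp_all add: scale_sum_right)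

context
  fixes V
  assumes V: "subspace V" and h: "linear_into smul V V h"
begin

lemma linear_into_L0_funpow: "linear_into smul V V (L0 smul h ^^ i)"
  by (rule linear_into_funpow[OF linear_into_L0[OF V h]])

lemma act_in: "v \<in> V \<Longrightarrow> act p v \<in> V"
  unfolding polyact_def using linear_intoD(1)[OF linear_into_L0_funpow]
  by (intro subspace_sum[OF V] subspace_scale[OF V]) auto

lemma linear_into_act: "linear_into smul V V (act p)"
  unfolding linear_into_def
proof (intro conjI ballI allI)
  fix u v assume "u \<in> V" "v \<in> V"
  then show "act p (u + v) = act p u + act p v"
    unfolding polyact_def using linear_intoD(2)[OF linear_into_L0_funpow]
    by (simp add: scale_right_distrib sum.distrib)
next
  fix c v assume "v \<in> V"
  then show "act p (smul c v) = smul c (act p v)"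
    unfolding polyact_def using linear_intoD(3)[OF linear_into_L0_funpow]
    by (simp add: scale_sum_right scale_left_commute mult.commute)
qed (rule act_in)

lemma act_pCons:
  assumes v: "v \<in> V"
  shows "act (pCons a p) v = smul a v + L0 smul h (act p v)"
proof -
  let ?L = "L0 smul h" and ?N = "Suc (degree p)"
  have terms_in: "smul (coeff p i) ((?L ^^ i) v) \<in> V" for i
    using linear_intoD(1)[OF linear_into_L0_funpow v] by (rule subspace_scale[OF V])
  have "act (pCons a p) v = (\<Sum>i<Suc ?N. smul (coeff (pCons a p) i) ((?L ^^ i) v))"
    by (rule act_eq_sum_lessThan) (simp add: degree_pCons_le le_less_trans)
  also have "\<dots> = smul a v + (\<Sum>i<?N. smul (coeff p i) ((?L ^^ Suc i) v))"
    by (subst sum.lessThan_Suc_shift) simp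
  also have "(\<Sum>i<?N. smul (coeff p i) ((?L ^^ Suc i) v)) = (\<Sum>i<?N. ?L (smul (coeff p i) ((?L ^^ i) v)))"
    using linear_intoD(3)[OF linear_into_L0[OF V h]] linear_intoD(1)[OF linear_into_L0_funpow v] by simp
  also have "\<dots> = ?L (\<Sum>i<?N. smul (coeff p i) ((?L ^^ i) v))"
    using terms_in by (intro linear_into_sum[OF V linear_into_L0[OF V h], symmetric])
  also have "(\<Sum>i<?N. smul (coeff p i) ((?L ^^ i) v)) = act p v"
    by (rule act_eq_sum_lessThan[symmetric]) simp
  finally show ?thesis .
qed

lemma act_mult: "v \<in> V \<Longrightarrow> act (p * q) v = act p (act q v)"
proof (induction p)
  case (pCons a p)
  have "act (pCons a p * q) v = act (smult a q) v + act (pCons 0 (p * q)) v"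
    by (simp add: act_add)
  also have "\<dots> = smul a (act q v) + L0 smul h (act p (act q v))"
    using pCons act_pCons by (simp add: act_smult)
  also have "\<dots> = act (pCons a p) (act q v)"
    using act_pCons act_in pCons.prems by simp
  finally show ?case .
qed (simp add: act_0)

lemma act_commute:
  assumes W: "subspace W" and g: "linear_into smul V W g"
    and gh: "\<And>v. v \<in> V \<Longrightarrow> g (h v) = h (g v)" and v: "v \<in> V"
  shows "g (act p v) = act p (g v)"
proof -
  have gL0: "g (L0 smul h w) = L0 smul h (g w)" if "w \<in> V" for w
    unfolding L0_def using linear_intoD(3)[OF g linear_intoD(1)[OF h that], of "-1/2"] gh[OF that] by simp
  have gL: "g ((L0 smul h ^^ i) u) = (L0 smul h ^^ i) (g u)" if "u \<in> V" for u i
    using that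
  proof (induction i)
    case (Suc i)
    then show ?case using gL0 linear_intoD(1)[OF linear_into_L0_funpow] by simp
  qed simp
  have "g (act p v) = (\<Sum>i\<le>degree p. g (smul (coeff p i) ((L0 smul h ^^ i) v)))"
    unfolding polyact_def using linear_intoD(1)[OF linear_into_L0_funpow v]
    by (intro linear_into_sum[OF V g] subspace_scale[OF V])
  also have "\<dots> = act p (g v)"
    unfolding polyact_def using linear_intoD(1)[OF linear_into_L0_funpow v]
    by (intro sum.cong) (simp_all add: gL[OF v] linear_intoD(3)[OF g])
  finally show ?thesis .
qed

end

abbreviation rational :: "'v set \<Rightarrow> bool" where
  "rational V \<equiv> rational_module smul V e f h"

abbreviation rational_sub :: "'v set \<Rightarrow> 'v set \<Rightarrow> bool" where
  "rational_sub W V \<equiv> rational_submodule smul W V e f h"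

lemma sl2_module_linear:
  assumes "sl2_module smul V e f h"
  shows "subspace V" "linear_into smul V V e" "linear_into smul V V f" "linear_into smul V V h"
  using assms unfolding sl2_module_def linear_into_def by auto

lemma sl2_module_subset:
  assumes "sl2_module smul V e f h" "U \<subseteq> V" "subspace U"
    and "\<And>v. v \<in> U \<Longrightarrow> e v \<in> U \<and> f v \<in> U \<and> h v \<in> U"
  shows "sl2_module smul U e f h"
  unfolding sl2_module_def
proof (intro conjI)
  show "subspace U" by (fact assms(3))
  have "linear_into smul U U x" if "x \<in> {e, f, h}" for x
    using linear_into_restrict[OF _ assms(2)] sl2_module_linear(2-4)[OF assms(1)] assms(4) that by auto
  then show "\<forall>x\<in>{e, f, h}. (\<forall>v\<in>U. x v \<in> U) \<and> (\<forall>u\<in>U. \<forall>v\<in>U. x (u + v) = x u + x v) \<and>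
      (\<forall>c. \<forall>v\<in>U. x (smul c v) = smul c (x v))"
    unfolding linear_into_def by blast
qed (use assms(1,2) in \<open>auto simp: sl2_module_def\<close>)

lemma rationalD:
  assumes "rational V"
  shows "sl2_module smul V e f h" "p \<noteq> 0 \<Longrightarrow> bij_betw (act p) V V"
    "\<exists>S. finite S \<and> S \<subseteq> V \<and> (\<forall>v\<in>V. \<exists>p c. p \<noteq> 0 \<and> act p v = (\<Sum>s\<in>S. act (c s) s))"
  using assms unfolding rational_module_def by auto

context
  fixes V
  assumes V: "rational V"
begin

lemma rational_subspace: "subspace V"
  and rational_linear_h: "linear_into smul V V h"
  using sl2_module_linear[OF rationalD(1)[OF V]] by auto

lemma rational_closed: "w \<in> V \<Longrightarrow> e w \<in> V" "w \<in> V \<Longrightarrow> f w \<in> V" "w \<in> V \<Longrightarrow> h w \<in> V"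
  using sl2_module_linear[OF rationalD(1)[OF V]] by (auto dest: linear_intoD(1))

lemma rational_0: "0 \<in> V"
  using subspace_0[OF rational_subspace] .

lemma rational_act_in: "v \<in> V \<Longrightarrow> act p v \<in> V"
  using act_in[OF rational_subspace rational_linear_h] .

lemma rational_act_inj: "p \<noteq> 0 \<Longrightarrow> v \<in> V \<Longrightarrow> w \<in> V \<Longrightarrow> act p v = act p w \<Longrightarrow> v = w"
  using bij_betw_imp_inj_on[OF rationalD(2)[OF V]] by (auto dest: inj_onD)

lemma rational_act_surj: "p \<noteq> 0 \<Longrightarrow> u \<in> V \<Longrightarrow> \<exists>w\<in>V. act p w = u"
  using bij_betw_imp_surj_on[OF rationalD(2)[OF V]] by (metis imageE)

end

text \<open>Independence over \<open>\<complex>(z)\<close>, with denominators cleared.\<close>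

definition poly_independent :: "'v set \<Rightarrow> bool" where
  "poly_independent T \<longleftrightarrow> finite T \<and> (\<forall>c. (\<Sum>t\<in>T. act (c t) t) = 0 \<longrightarrow> (\<forall>t\<in>T. c t = 0))"

lemma poly_independent_coeffs_vanish:
  assumes V: "rational V" and T: "poly_independent T" "T \<subseteq> V" and S: "S \<subseteq> V"
    and P: "\<And>t. t \<in> T \<Longrightarrow> act (P t) t = (\<Sum>s\<in>S. act (C t s) s)"
    and c: "\<And>s. s \<in> S \<Longrightarrow> (\<Sum>t\<in>T. c t * C t s) = 0" and t: "t \<in> T"
  shows "c t * P t = 0"
proof -
  have sV: "subspace V" and hV: "linear_into smul V V h"
    using rational_subspace[OF V] rational_linear_h[OF V] .
  have "act (c t) (\<Sum>s\<in>S. act (C t s) s) = (\<Sum>s\<in>S. act (c t * C t s) s)" for t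
  proof -
    have "act (c t) (\<Sum>s\<in>S. act (C t s) s) = (\<Sum>s\<in>S. act (c t) (act (C t s) s))"
      using S rational_act_in[OF V] by (intro linear_into_sum[OF sV linear_into_act[OF sV hV]]) auto
    also have "\<dots> = (\<Sum>s\<in>S. act (c t * C t s) s)"
      using S by (intro sum.cong) (auto simp: act_mult[OF sV hV])
    finally show ?thesis .
  qed
  then have "(\<Sum>t\<in>T. act (c t * P t) t) = (\<Sum>t\<in>T. \<Sum>s\<in>S. act (c t * C t s) s)"
    using T(2) by (intro sum.cong) (auto simp: act_mult[OF sV hV] P)
  also have "\<dots> = (\<Sum>s\<in>S. act (\<Sum>t\<in>T. c t * C t s) s)"
    by (subst sum.swap) (simp add: act_sum)
  also have "\<dots> = 0"
    by (simp add: c act_0)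
  finally show ?thesis
    using T(1) t unfolding poly_independent_def by (auto dest!: spec[of _ "\<lambda>t. c t * P t"])
qed

lemma poly_independent_coordinates:
  assumes V: "rational V" and T: "poly_independent T" "T \<subseteq> V" and S: "S \<subseteq> V"
    and P: "\<And>t. t \<in> T \<Longrightarrow> P t \<noteq> 0" and PC: "\<And>t. t \<in> T \<Longrightarrow> act (P t) t = (\<Sum>s\<in>S. act (C t s) s)"
    and lam: "\<And>s. s \<in> S \<Longrightarrow> (\<Sum>t\<in>T. lam t * Fract (C t s) (P t)) = 0"
  shows "\<forall>t\<in>T. lam t = 0"
proof -
  have fT: "finite T" using T(1) unfolding poly_independent_def by simp
  have "\<forall>t. \<exists>n d. lam t = Fract n d \<and> d \<noteq> 0" by (metis Fract_cases)
  then obtain n d where nd: "\<And>t. lam t = Fract (n t) (d t)" "\<And>t. d t \<noteq> 0" by metis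
  define D where "D t = d t * P t" for t
  have D: "t \<in> T \<Longrightarrow> D t \<noteq> 0" for t using nd(2) P by (simp add: D_def)
  define c where "c t = n t * (\<Prod>t'\<in>T - {t}. D t')" for t
  have "(\<Sum>t\<in>T. c t * C t s) = 0" if s: "s \<in> S" for s
  proof -
    have "(\<Sum>t\<in>T. Fract (n t * C t s) (D t)) = (\<Sum>t\<in>T. lam t * Fract (C t s) (P t))"
      by (simp add: nd D_def)
    also have "\<dots> = 0" using lam[OF s] .
    finally show ?thesis
      using sum_Fract_eq_0_imp[of T D "\<lambda>t. n t * C t s"] fT D by (simp add: c_def ac_simps)
  qed
  then have "c t * P t = 0" if "t \<in> T" for t
    using poly_independent_coeffs_vanish[OF V T S PC] that by blast
  then have "n t = 0" if "t \<in> T" for t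
    using that D P fT by (simp add: c_def)
  then show ?thesis by (simp add: nd eq_fract(3) Zero_fract_def)
qed

lemma card_poly_independent_le:
  assumes V: "rational V" and S: "finite S" "S \<subseteq> V"
    and span: "\<And>v. v \<in> V \<Longrightarrow> \<exists>p c. p \<noteq> 0 \<and> act p v = (\<Sum>s\<in>S. act (c s) s)"
    and T: "T \<subseteq> V" "poly_independent T"
  shows "card T \<le> card S"
proof -
  obtain P C where P: "\<And>t. t \<in> T \<Longrightarrow> P t \<noteq> 0"
    and PC: "\<And>t. t \<in> T \<Longrightarrow> act (P t) t = (\<Sum>s\<in>S. act (C t s) s)"
    using span T(1) by (metis subsetD)
  have "finite T" using T(2) unfolding poly_independent_def by simp
  then show ?thesis
    by (rule card_le_if_coordinates_independent[OF S(1) _ poly_independent_coordinates[OF V T(2,1) S(2) P PC]])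
qed

definition poly_rank :: "'v set \<Rightarrow> nat" where
  "poly_rank W = Max (card ` {T. T \<subseteq> W \<and> poly_independent T})"

context
  fixes V
  assumes V: "rational V"
begin

lemma finite_poly_independent_cards:
  assumes "W \<subseteq> V"
  shows "finite (card ` {T. T \<subseteq> W \<and> poly_independent T})"
proof -
  obtain S where S: "finite S" "S \<subseteq> V" "\<forall>v\<in>V. \<exists>p c. p \<noteq> 0 \<and> act p v = (\<Sum>s\<in>S. act (c s) s)"
    using rationalD(3)[OF V] by blast
  have "card ` {T. T \<subseteq> W \<and> poly_independent T} \<subseteq> {..card S}"
    using card_poly_independent_le[OF V S(1,2)] S(3) assms by fastforce
  then show ?thesis by (rule finite_subset) simp
qed

lemma card_le_poly_rank: "W \<subseteq> V \<Longrightarrow> T \<subseteq> W \<Longrightarrow> poly_independent T \<Longrightarrow> card T \<le> poly_rank W"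
  unfolding poly_rank_def by (rule Max_ge[OF finite_poly_independent_cards]) auto

lemma poly_rank_witness:
  assumes "W \<subseteq> V"
  obtains T where "T \<subseteq> W" "poly_independent T" "card T = poly_rank W"
proof -
  have "{} \<in> {T. T \<subseteq> W \<and> poly_independent T}" by (simp add: poly_independent_def)
  then have "poly_rank W \<in> card ` {T. T \<subseteq> W \<and> poly_independent T}"
    unfolding poly_rank_def using Max_in[OF finite_poly_independent_cards[OF assms]] by blast
  then show ?thesis using that by auto
qed

lemma poly_rank_mono: "U \<subseteq> W \<Longrightarrow> W \<subseteq> V \<Longrightarrow> poly_rank U \<le> poly_rank W"
  by (metis card_le_poly_rank dual_order.trans poly_rank_witness)

text \<open>A rational submodule is divisible and the action of a nonzero polynomial is injective on
  \<open>V\<close>, so no vector outside it becomes dependent on it.\<close>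

lemma poly_independent_insert:
  assumes U: "rational U" "U \<subseteq> V" and T: "T \<subseteq> U" "poly_independent T" and v: "v \<in> V" "v \<notin> U"
  shows "poly_independent (insert v T)"
  unfolding poly_independent_def
proof (intro conjI allI impI)
  have fT: "finite T" and vT: "v \<notin> T" using T v unfolding poly_independent_def by auto
  then show "finite (insert v T)" by simp
  fix c assume "(\<Sum>t\<in>insert v T. act (c t) t) = 0"
  then have sum0: "act (c v) v + (\<Sum>t\<in>T. act (c t) t) = 0" using fT vT by simp
  have cv: "c v = 0"
  proof (rule ccontr)
    assume cv: "c v \<noteq> 0"
    have "(\<Sum>t\<in>T. act (c t) t) \<in> U"
      using T(1) rational_act_in[OF U(1)] by (intro subspace_sum[OF rational_subspace[OF U(1)]]) auto
    then have "act (c v) v \<in> U"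
      using sum0 subspace_neg[OF rational_subspace[OF U(1)]] by (metis add.commute add_eq_0_iff)
    then obtain w where "w \<in> U" "act (c v) w = act (c v) v" using rational_act_surj[OF U(1) cv] by blast
    then show False using rational_act_inj[OF V cv, of w v] U(2) v by auto
  qed
  then have "\<forall>t\<in>T. c t = 0" using sum0 T(2) unfolding poly_independent_def by (simp add: act_0)
  then show "\<forall>t\<in>insert v T. c t = 0" using cv by simp
qed

lemma poly_rank_less:
  assumes U: "rational U" and UW: "U \<subset> W" and W: "W \<subseteq> V"
  shows "poly_rank U < poly_rank W"
proof -
  have UV: "U \<subseteq> V" using UW W by auto
  obtain T where T: "T \<subseteq> U" "poly_independent T" "card T = poly_rank U"
    using poly_rank_witness[OF UV] by blast
  obtain v where v: "v \<in> W" "v \<notin> U" using UW by blast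
  have vV: "v \<in> V" and vTW: "insert v T \<subseteq> W" using UW W v T(1) by auto
  have "poly_independent (insert v T)" using poly_independent_insert[OF U(1) UV T(1,2) vV v(2)] .
  then have "card (insert v T) \<le> poly_rank W" using card_le_poly_rank[OF W vTW] by blast
  moreover have "finite T" "v \<notin> T" using T v unfolding poly_independent_def by auto
  ultimately show ?thesis using T(3) by simp
qed

lemma maximal_poly_independent_spans:
  assumes U: "U \<subseteq> V" and T: "T \<subseteq> U" "poly_independent T" "card T = poly_rank U" and v: "v \<in> U"
  shows "\<exists>p c. p \<noteq> 0 \<and> act p v = (\<Sum>s\<in>T. act (c s) s)"
proof (cases "v \<in> T")
  case True
  have fT: "finite T" using T(2) unfolding poly_independent_def by simp
  have "(\<Sum>s\<in>T. act (if s = v then 1 else 0) s) = (\<Sum>s\<in>T. if s = v then s else 0)"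
    by (intro sum.cong) (auto simp: act_1 act_0)
  then show ?thesis using True fT by (intro exI[of _ 1] exI[of _ "\<lambda>s. if s = v then 1 else 0"]) (simp add: act_1)
next
  case False
  have fT: "finite T" using T(2) unfolding poly_independent_def by simp
  have "\<not> poly_independent (insert v T)"
    using card_le_poly_rank[OF U, of "insert v T"] T v fT False by auto
  then obtain c where c: "(\<Sum>t\<in>insert v T. act (c t) t) = 0" "\<exists>t\<in>insert v T. c t \<noteq> 0"
    using fT unfolding poly_independent_def by auto
  then have sum0: "act (c v) v + (\<Sum>t\<in>T. act (c t) t) = 0" using fT False by simp
  have cv: "c v \<noteq> 0"
  proof
    assume "c v = 0"
    then have "\<forall>t\<in>T. c t = 0" using sum0 T(2) unfolding poly_independent_def by (simp add: act_0)
    then show False using c(2) \<open>c v = 0\<close> by auto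
  qed
  have "act (c v) v = (\<Sum>t\<in>T. act (- c t) t)"
    using sum0 by (simp add: act_uminus sum_negf eq_neg_iff_add_eq_0)
  with cv show ?thesis by (intro exI[of _ "c v"] exI[of _ "\<lambda>t. - c t"]) simp
qed

lemma rational_if_divisible:
  assumes U: "U \<subseteq> V" "subspace U" and closed: "\<And>v. v \<in> U \<Longrightarrow> e v \<in> U \<and> f v \<in> U \<and> h v \<in> U"
    and divisible: "\<And>p u. p \<noteq> 0 \<Longrightarrow> u \<in> U \<Longrightarrow> \<exists>w\<in>U. act p w = u"
  shows "rational U"
  unfolding rational_module_def
proof (intro conjI allI impI)
  show sl2: "sl2_module smul U e f h" using sl2_module_subset[OF rationalD(1)[OF V] U closed] .
  fix p :: "complex poly" assume p: "p \<noteq> 0"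
  have "inj_on (act p) U" using rational_act_inj[OF V p] U(1) by (auto intro: inj_onI)
  moreover have "act p ` U = U"
    using act_in[OF U(2) sl2_module_linear(4)[OF sl2]] divisible[OF p] by blast
  ultimately show "bij_betw (act p) U U" by (simp add: bij_betw_def)
next
  obtain T where T: "T \<subseteq> U" "poly_independent T" "card T = poly_rank U"
    using poly_rank_witness[OF U(1)] by blast
  show "\<exists>S. finite S \<and> S \<subseteq> U \<and> (\<forall>v\<in>U. \<exists>p c. p \<noteq> 0 \<and> act p v = (\<Sum>s\<in>S. act (c s) s))"
  proof (intro exI[of _ T] conjI ballI)
    show "finite T" using T(2) unfolding poly_independent_def by simp
  qed (use maximal_poly_independent_spans[OF U(1) T] T(1) in simp_all)
qed

lemma rational_sub_0: "rational_sub {0} V"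
proof -
  have "linear_into smul V V x \<Longrightarrow> x 0 = 0" for x
    using linear_into_0[OF rational_subspace[OF V]] by blast
  then have "e 0 = 0" "f 0 = 0" "h 0 = 0"
    using sl2_module_linear[OF rationalD(1)[OF V]] by auto
  moreover have "act p 0 = 0" for p
    using linear_into_0[OF rational_subspace[OF V] linear_into_act[OF rational_subspace[OF V] rational_linear_h[OF V]]] .
  ultimately have "rational {0}"
    using rational_0[OF V] by (intro rational_if_divisible) auto
  then show ?thesis unfolding rational_submodule_def using rational_0[OF V] by simp
qed

end

lemma rational_sub_refl: "rational V \<Longrightarrow> rational_sub V V"
  unfolding rational_submodule_def by simp

lemma rational_sub_trans: "rational_sub U W \<Longrightarrow> rational_sub W V \<Longrightarrow> rational_sub U V"
  unfolding rational_submodule_def by auto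

lemma jordan_hoelder_filtration_snoc:
  assumes JH: "jordan_hoelder_filtration smul U e f h Vs n" and UW: "U \<subset> W" and W: "rational W"
    and maximal: "\<not> (\<exists>U'. rational_sub U' W \<and> U \<subset> U' \<and> U' \<subset> W)"
  shows "jordan_hoelder_filtration smul W e f h (Vs(Suc n := W)) (Suc n)"
proof -
  have Vs0: "Vs 0 = {0}" and Vsn: "Vs n = U"
    using JH by (simp_all add: jordan_hoelder_filtration_def)
  have sub: "rational_sub (Vs i) U" if "i \<le> n" for i
    using JH that by (simp add: jordan_hoelder_filtration_def)
  have step: "Vs i \<subset> Vs (Suc i)"
    and gap: "\<not> (\<exists>U'. rational_sub U' U \<and> Vs i \<subset> U' \<and> U' \<subset> Vs (Suc i))" if "i < n" for i
    using JH that by (simp_all add: jordan_hoelder_filtration_def)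
  have UW_sub: "rational_sub U W"
    using sub[of n] UW unfolding Vsn rational_submodule_def by auto
  show ?thesis
    unfolding jordan_hoelder_filtration_def
  proof (intro conjI allI impI)
    fix i
    show "i \<le> Suc n \<Longrightarrow> rational_sub ((Vs(Suc n := W)) i) W"
      using rational_sub_refl[OF W] rational_sub_trans[OF sub UW_sub] by (cases "i = Suc n") auto
    assume i: "i < Suc n"
    show "(Vs(Suc n := W)) i \<subset> (Vs(Suc n := W)) (Suc i)"
      using step UW Vsn i by (cases "i = n") auto
    show "\<not> (\<exists>U'. rational_sub U' W \<and> (Vs(Suc n := W)) i \<subset> U' \<and> U' \<subset> (Vs(Suc n := W)) (Suc i))"
    proof (cases "i = n")
      case False
      show ?thesis
      proof
        assume "\<exists>U'. rational_sub U' W \<and> (Vs(Suc n := W)) i \<subset> U' \<and> U' \<subset> (Vs(Suc n := W)) (Suc i)"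
        then obtain U' where U': "rational U'" "Vs i \<subset> U'" "U' \<subset> Vs (Suc i)"
          using False i unfolding rational_submodule_def by auto
        moreover have "Vs (Suc i) \<subseteq> U" using sub[of "Suc i"] i False unfolding rational_submodule_def by simp
        ultimately have "rational_sub U' U" unfolding rational_submodule_def by auto
        then show False using gap[of i] U'(2,3) i False by auto
      qed
    qed (use maximal Vsn in simp)
  qed (use Vs0 in simp_all)
qed

lemma jordan_hoelder_filtration_exists:
  "rational W \<Longrightarrow> \<exists>Vs n. jordan_hoelder_filtration smul W e f h Vs n"
proof (induction "poly_rank W" arbitrary: W rule: less_induct)
  case less
  show ?case
  proof (cases "W = {0}")
    case True
    then show ?thesis
      using rational_sub_0[OF less.prems]
      by (intro exI[of _ "\<lambda>_. {0}"] exI[of _ 0]) (simp add: jordan_hoelder_filtration_def)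
  next
    case False
    define proper where "proper U \<longleftrightarrow> rational_sub U W \<and> U \<subset> W" for U
    have "proper {0}" using rational_sub_0[OF less.prems] False
      unfolding proper_def rational_submodule_def by auto
    moreover have "poly_rank U < Suc (poly_rank W)" if "proper U" for U
      using poly_rank_mono[OF less.prems] that unfolding proper_def rational_submodule_def
      by (simp add: le_imp_less_Suc)
    ultimately obtain U where U: "proper U" and max: "\<And>U'. proper U' \<Longrightarrow> poly_rank U' \<le> poly_rank U"
      using Lattices_Big.ex_has_greatest_nat[of proper "{0}" poly_rank] by blast
    have U_rational: "rational U" and UW: "U \<subset> W" using U unfolding proper_def rational_submodule_def by auto
    have maximal: "\<not> (\<exists>U'. rational_sub U' W \<and> U \<subset> U' \<and> U' \<subset> W)"
    proof
      assume "\<exists>U'. rational_sub U' W \<and> U \<subset> U' \<and> U' \<subset> W"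
      then obtain U' where U': "proper U'" "U \<subset> U'" unfolding proper_def by blast
      then have "poly_rank U < poly_rank U'"
        using poly_rank_less[OF less.prems U_rational] unfolding proper_def rational_submodule_def by blast
      then show False using max[OF U'(1)] by simp
    qed
    obtain Vs n where "jordan_hoelder_filtration smul U e f h Vs n"
      using less.hyps[OF poly_rank_less[OF less.prems U_rational UW order_refl] U_rational] by blast
    then have "jordan_hoelder_filtration smul W e f h (Vs(Suc n := W)) (Suc n)"
      using UW less.prems maximal by (rule jordan_hoelder_filtration_snoc)
    then show ?thesis by blast
  qed
qed

abbreviation hom :: "'v set \<Rightarrow> 'v set \<Rightarrow> ('v \<Rightarrow> 'v) \<Rightarrow> bool" where
  "hom A B \<phi> \<equiv> sl2_hom smul A B e f h \<phi>"

lemma homI: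
  assumes "linear_into smul A B \<phi>" "\<And>v. v \<in> A \<Longrightarrow> \<phi> (e v) = e (\<phi> v)"
    "\<And>v. v \<in> A \<Longrightarrow> \<phi> (f v) = f (\<phi> v)" "\<And>v. v \<in> A \<Longrightarrow> \<phi> (h v) = h (\<phi> v)"
  shows "hom A B \<phi>"
  using assms unfolding sl2_hom_def linear_into_def by auto

lemma homD:
  assumes "hom A B \<phi>"
  shows "linear_into smul A B \<phi>" "v \<in> A \<Longrightarrow> \<phi> v \<in> B" "v \<in> A \<Longrightarrow> \<phi> (e v) = e (\<phi> v)"
    "v \<in> A \<Longrightarrow> \<phi> (f v) = f (\<phi> v)" "v \<in> A \<Longrightarrow> \<phi> (h v) = h (\<phi> v)"
  using assms unfolding sl2_hom_def linear_into_def by auto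

lemma hom_id: "hom A A (\<lambda>v. v)"
  unfolding sl2_hom_def by simp

lemma hom_comp: "hom A B \<phi> \<Longrightarrow> hom B C \<psi> \<Longrightarrow> hom A C (\<lambda>v. \<psi> (\<phi> v))"
  unfolding sl2_hom_def by auto

lemma hom_funpow: "hom A A \<phi> \<Longrightarrow> hom A A (\<phi> ^^ k)"
  by (induction k) (auto simp: id_def hom_id comp_def intro: hom_comp)

lemma hom_restrict: "hom A B \<phi> \<Longrightarrow> A' \<subseteq> A \<Longrightarrow> (\<And>v. v \<in> A' \<Longrightarrow> \<phi> v \<in> B') \<Longrightarrow> hom A' B' \<phi>"
  unfolding sl2_hom_def by (auto simp: subset_iff)

lemma hom_subset_domain: "hom A B \<phi> \<Longrightarrow> A' \<subseteq> A \<Longrightarrow> hom A' B \<phi>"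
  unfolding sl2_hom_def by blast

lemma hom_subset_codomain: "hom A B \<phi> \<Longrightarrow> B \<subseteq> C \<Longrightarrow> hom A C \<phi>"
  unfolding sl2_hom_def by blast

lemma hom_0: "rational A \<Longrightarrow> hom A A \<phi> \<Longrightarrow> \<phi> 0 = 0"
  using linear_into_0[OF rational_subspace homD(1)] by blast

lemma hom_add:
  assumes \<phi>: "hom A B \<phi>" and \<psi>: "hom A B \<psi>" and B: "rational B"
  shows "hom A B (\<lambda>v. \<phi> v + \<psi> v)"
proof -
  have L: "linear_into smul B B e" "linear_into smul B B f" "linear_into smul B B h"
    using sl2_module_linear(2-4)[OF rationalD(1)[OF B]] .
  show ?thesis
  proof (rule homI)
    show "linear_into smul A B (\<lambda>v. \<phi> v + \<psi> v)"
      using homD(1)[OF \<phi>] homD(1)[OF \<psi>] subspace_add[OF rational_subspace[OF B]] unfolding linear_into_def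
      by (auto simp: scale_right_distrib)
  qed (use homD[OF \<phi>] homD[OF \<psi>] linear_intoD(2)[OF L(1)] linear_intoD(2)[OF L(2)]
      linear_intoD(2)[OF L(3)] in simp_all)
qed

lemma hom_diff:
  assumes \<phi>: "hom A B \<phi>" and \<psi>: "hom A B \<psi>" and B: "rational B"
  shows "hom A B (\<lambda>v. \<phi> v - \<psi> v)"
proof -
  have L: "linear_into smul B B e" "linear_into smul B B f" "linear_into smul B B h"
    using sl2_module_linear(2-4)[OF rationalD(1)[OF B]] .
  show ?thesis
  proof (rule homI)
    show "linear_into smul A B (\<lambda>v. \<phi> v - \<psi> v)"
      using homD(1)[OF \<phi>] homD(1)[OF \<psi>] subspace_diff[OF rational_subspace[OF B]] unfolding linear_into_def
      by (auto simp: scale_right_diff_distrib)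
  qed (use homD[OF \<phi>] homD[OF \<psi>] linear_into_diff[OF rational_subspace[OF B] L(1)]
      linear_into_diff[OF rational_subspace[OF B] L(2)] linear_into_diff[OF rational_subspace[OF B] L(3)]
      in simp_all)
qed

lemma hom_sum:
  assumes B: "rational B" and J: "finite J" and \<phi>: "\<And>j. j \<in> J \<Longrightarrow> hom A B (\<phi> j)"
  shows "hom A B (\<lambda>v. \<Sum>j\<in>J. \<phi> j v)"
  using J \<phi>
proof (induction J rule: finite_induct)
  case empty
  have "e 0 = 0" "f 0 = 0" "h 0 = 0"
    using sl2_module_linear(2-4)[OF rationalD(1)[OF B]] linear_into_0[OF rational_subspace[OF B]] by blast+
  then show ?case using rational_0[OF B] unfolding sl2_hom_def by simp
next
  case (insert a J)
  then show ?case using hom_add[OF _ _ B, of A "\<phi> a" "\<lambda>v. \<Sum>j\<in>J. \<phi> j v"] by simp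
qed

lemma hom_act: "rational A \<Longrightarrow> rational B \<Longrightarrow> hom A B \<phi> \<Longrightarrow> v \<in> A \<Longrightarrow> \<phi> (act p v) = act p (\<phi> v)"
  using act_commute[OF rational_subspace rational_linear_h rational_subspace] homD(1,5) by blast

lemma hom_the_inv_into:
  assumes A: "rational A" and \<phi>: "hom A B \<phi>" and bij: "bij_betw \<phi> A B"
  shows "hom B A (the_inv_into A \<phi>)"
proof -
  let ?\<psi> = "the_inv_into A \<phi>"
  have \<psi>: "v \<in> B \<Longrightarrow> ?\<psi> v \<in> A" "v \<in> B \<Longrightarrow> \<phi> (?\<psi> v) = v" "v \<in> A \<Longrightarrow> ?\<psi> (\<phi> v) = v" for v
    using bij_betwE[OF bij_betw_the_inv_into[OF bij]] the_inv_into_f_f f_the_inv_into_f_bij_betw[OF bij] bij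
    by (auto simp: bij_betw_def)
  have L: "linear_into smul A A e" "linear_into smul A A f" "linear_into smul A A h"
    using sl2_module_linear(2-4)[OF rationalD(1)[OF A]] .
  have "?\<psi> (u + v) = ?\<psi> u + ?\<psi> v" if u: "u \<in> B" and v: "v \<in> B" for u v
  proof -
    have "\<phi> (?\<psi> u + ?\<psi> v) = u + v"
      using linear_intoD(2)[OF homD(1)[OF \<phi>] \<psi>(1)[OF u] \<psi>(1)[OF v]] \<psi>(2) u v by simp
    then show ?thesis using \<psi>(3)[OF subspace_add[OF rational_subspace[OF A] \<psi>(1)[OF u] \<psi>(1)[OF v]]] by simp
  qed
  moreover have "?\<psi> (smul c v) = smul c (?\<psi> v)" if v: "v \<in> B" for c v
  proof -
    have "\<phi> (smul c (?\<psi> v)) = smul c v" using linear_intoD(3)[OF homD(1)[OF \<phi>] \<psi>(1)[OF v]] \<psi>(2)[OF v] by simp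
    then show ?thesis using \<psi>(3)[OF subspace_scale[OF rational_subspace[OF A] \<psi>(1)[OF v]], of c] by simp
  qed
  moreover have "?\<psi> (x v) = x (?\<psi> v)" if x: "linear_into smul A A x" "\<And>a. a \<in> A \<Longrightarrow> \<phi> (x a) = x (\<phi> a)"
    and v: "v \<in> B" for x v
  proof -
    have "\<phi> (x (?\<psi> v)) = x v" using x(2)[OF \<psi>(1)[OF v]] \<psi>(2)[OF v] by simp
    then show ?thesis using \<psi>(3)[OF linear_intoD(1)[OF x(1) \<psi>(1)[OF v]]] by simp
  qed
  then have "?\<psi> (x v) = x (?\<psi> v)" if "x \<in> {e, f, h}" "v \<in> B" for x v
    using that L homD(3-5)[OF \<phi>] by blast
  ultimately show ?thesis using \<psi>(1) unfolding sl2_hom_def by blast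
qed

abbreviation decomp :: "'v set \<Rightarrow> (nat \<Rightarrow> 'v set) \<Rightarrow> nat \<Rightarrow> bool" where
  "decomp V Ws n \<equiv> direct_sum_decomp smul V e f h Ws n"

lemma decompI:
  assumes sub: "\<And>i. i < n \<Longrightarrow> rational_sub (Ws i) V"
    and span: "\<And>v. v \<in> V \<Longrightarrow> \<exists>w. (\<forall>i<n. w i \<in> Ws i) \<and> v = (\<Sum>i<n. w i)"
    and indep: "\<And>w. \<forall>i<n. w i \<in> Ws i \<Longrightarrow> (\<Sum>i<n. w i) = 0 \<Longrightarrow> \<forall>i<n. w i = 0"
  shows "decomp V Ws n"
  unfolding direct_sum_decomp_def
proof (intro conjI allI impI ballI sub)
  fix v assume v: "v \<in> V"
  obtain w where w: "\<forall>i<n. w i \<in> Ws i" "v = (\<Sum>i<n. w i)" using span[OF v] by blast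
  define w' where "w' i = (if i < n then w i else 0)" for i
  have sum_w': "(\<Sum>i<n. w' i) = (\<Sum>i<n. w i)" by (simp add: w'_def)
  show "\<exists>!w. (\<forall>i<n. w i \<in> Ws i) \<and> (\<forall>i\<ge>n. w i = 0) \<and> v = (\<Sum>i<n. w i)"
  proof (rule ex1I[of _ w'])
    show "(\<forall>i<n. w' i \<in> Ws i) \<and> (\<forall>i\<ge>n. w' i = 0) \<and> v = (\<Sum>i<n. w' i)"
      using w sum_w' by (simp add: w'_def)
  next
    fix y assume y: "(\<forall>i<n. y i \<in> Ws i) \<and> (\<forall>i\<ge>n. y i = 0) \<and> v = (\<Sum>i<n. y i)"
    have "\<forall>i<n. y i - w' i \<in> Ws i"
      using y w subspace_diff[OF rational_subspace] sub unfolding rational_submodule_def w'_def by simp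
    moreover have "(\<Sum>i<n. y i - w' i) = 0" using y w(2) sum_w' by (simp add: sum_subtractf)
    ultimately have "\<forall>i<n. y i - w' i = 0" by (rule indep)
    then show "y = w'" using y by (auto simp: fun_eq_iff w'_def not_less)
  qed
qed

lemma decomp_unique:
  "decomp V Ws n \<Longrightarrow> v \<in> V \<Longrightarrow> \<exists>!w. (\<forall>i<n. w i \<in> Ws i) \<and> (\<forall>i\<ge>n. w i = 0) \<and> v = (\<Sum>i<n. w i)"
  unfolding direct_sum_decomp_def by blast

lemma decomp_sub: "decomp V Ws n \<Longrightarrow> i < n \<Longrightarrow> rational_sub (Ws i) V"
  unfolding direct_sum_decomp_def by blast

lemma decomp_summand_subset: "decomp V Ws n \<Longrightarrow> i < n \<Longrightarrow> w \<in> Ws i \<Longrightarrow> w \<in> V"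
  using decomp_sub unfolding rational_submodule_def by blast

lemma decomp_summand_rational: "decomp V Ws n \<Longrightarrow> i < n \<Longrightarrow> rational (Ws i)"
  using decomp_sub unfolding rational_submodule_def by blast

definition component :: "(nat \<Rightarrow> 'v set) \<Rightarrow> nat \<Rightarrow> 'v \<Rightarrow> nat \<Rightarrow> 'v" where
  "component Ws n v = (THE w. (\<forall>i<n. w i \<in> Ws i) \<and> (\<forall>i\<ge>n. w i = 0) \<and> v = (\<Sum>i<n. w i))"

context
  fixes V Ws n
  assumes D: "decomp V Ws n"
begin

lemma component_eq:
  assumes "v \<in> V" "\<forall>i<n. w i \<in> Ws i" "\<forall>i\<ge>n. w i = 0" "v = (\<Sum>i<n. w i)"
  shows "component Ws n v = w"
  unfolding component_def using assms by (intro the1_equality[OF decomp_unique[OF D]]) simp_all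

lemma component_in: "v \<in> V \<Longrightarrow> i < n \<Longrightarrow> component Ws n v i \<in> Ws i"
  and component_out: "v \<in> V \<Longrightarrow> n \<le> i \<Longrightarrow> component Ws n v i = 0"
  and component_sum: "v \<in> V \<Longrightarrow> (\<Sum>i<n. component Ws n v i) = v"
  using theI'[OF decomp_unique[OF D]] unfolding component_def[symmetric] by auto

lemma component_of_summand: "j < n \<Longrightarrow> w \<in> Ws j \<Longrightarrow> component Ws n w = (\<lambda>i. if i = j then w else 0)"
  using decomp_summand_subset[OF D] rational_0[OF decomp_summand_rational[OF D]]
  by (intro component_eq) auto

lemma decomp_independent:
  assumes w: "\<forall>i<n. w i \<in> Ws i" and sum0: "(\<Sum>i<n. w i) = 0"
  shows "\<forall>i<n. w i = 0"
proof (intro allI impI)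
  fix i assume i: "i < n"
  then have "0 \<in> V" using decomp_summand_subset[OF D] rational_0[OF decomp_summand_rational[OF D]] by blast
  have "component Ws n 0 = (\<lambda>i. if i < n then w i else 0)"
    using w sum0 \<open>0 \<in> V\<close> by (intro component_eq) auto
  moreover have "component Ws n 0 = (\<lambda>_. 0)"
    using \<open>0 \<in> V\<close> rational_0[OF decomp_summand_rational[OF D]] by (intro component_eq) auto
  ultimately show "w i = 0" using i by (metis (full_types))
qed

lemma decomp_span: "v \<in> V \<Longrightarrow> \<exists>w. (\<forall>i<n. w i \<in> Ws i) \<and> v = (\<Sum>i<n. w i)"
  using component_in component_sum by metis

lemma hom_component:
  assumes V: "rational V" and j: "j < n"
  shows "hom V (Ws j) (\<lambda>v. component Ws n v j)"
proof -
  have sV: "subspace V" using rational_subspace[OF V] .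
  have sW: "subspace (Ws i)" if "i < n" for i using rational_subspace[OF decomp_summand_rational[OF D that]] .
  have cV: "component Ws n v i \<in> V" if "v \<in> V" "i < n" for v i
    using decomp_summand_subset[OF D _ component_in] that by blast
  have add: "component Ws n (u + v) = (\<lambda>i. component Ws n u i + component Ws n v i)" if "u \<in> V" "v \<in> V" for u v
    using that subspace_add[OF sV] subspace_add[OF sW] component_in component_out component_sum
    by (intro component_eq) (simp_all add: sum.distrib)
  have scale: "component Ws n (smul c v) = (\<lambda>i. smul c (component Ws n v i))" if "v \<in> V" for c v
    using that subspace_scale[OF sV] subspace_scale[OF sW] component_in component_out component_sum
    by (intro component_eq) (simp_all add: scale_sum_right[symmetric])
  have op: "component Ws n (x v) = (\<lambda>i. x (component Ws n v i))"
    if x: "linear_into smul V V x" "\<And>i w. i < n \<Longrightarrow> w \<in> Ws i \<Longrightarrow> x w \<in> Ws i" and v: "v \<in> V" for x v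
  proof (rule component_eq)
    show "x v \<in> V" using linear_intoD(1)[OF x(1) v] .
    show "\<forall>i<n. x (component Ws n v i) \<in> Ws i" using x(2) component_in[OF v] by simp
    show "\<forall>i\<ge>n. x (component Ws n v i) = 0" using component_out[OF v] linear_into_0[OF sV x(1)] by simp
    show "x v = (\<Sum>i<n. x (component Ws n v i))"
      using linear_into_sum[OF sV x(1), of "{..<n}" "component Ws n v"] cV[OF v] component_sum[OF v] by simp
  qed
  have closed: "\<And>i w. i < n \<Longrightarrow> w \<in> Ws i \<Longrightarrow> e w \<in> Ws i \<and> f w \<in> Ws i \<and> h w \<in> Ws i"
    using rational_closed[OF decomp_summand_rational[OF D]] by blast
  have L: "linear_into smul V V e" "linear_into smul V V f" "linear_into smul V V h"
    using sl2_module_linear(2-4)[OF rationalD(1)[OF V]] .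
  show ?thesis
  proof (rule homI)
    show "linear_into smul V (Ws j) (\<lambda>v. component Ws n v j)"
      unfolding linear_into_def using component_in[OF _ j] add scale by simp
  qed (use op[OF L(1)] op[OF L(2)] op[OF L(3)] closed in auto)
qed

end

lemma decomp2I:
  assumes A: "rational_sub A W" and B: "rational_sub B W" and AB: "A \<inter> B \<subseteq> {0}"
    and span: "\<And>x. x \<in> W \<Longrightarrow> \<exists>a\<in>A. \<exists>b\<in>B. x = a + b"
  shows "decomp W (\<lambda>i. if i = 0 then A else B) 2"
proof (rule decompI)
  show "rational_sub (if i = 0 then A else B) W" for i using A B by simp
next
  fix v assume "v \<in> W"
  then obtain a b where "a \<in> A" "b \<in> B" "v = a + b" using span by blast
  then show "\<exists>w. (\<forall>i<(2::nat). w i \<in> (if i = 0 then A else B)) \<and> v = (\<Sum>i<(2::nat). w i)"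
    by (intro exI[of _ "\<lambda>i::nat. if i = 0 then a else b"]) (simp add: numeral_2_eq_2)
next
  fix w assume w: "\<forall>i<(2::nat). w i \<in> (if i = 0 then A else B)" "(\<Sum>i<(2::nat). w i) = 0"
  have w0: "w 0 \<in> A" and w1: "w 1 \<in> B" using w(1)[rule_format, of 0] w(1)[rule_format, of 1] by simp_all
  have sum0: "w 0 + w 1 = 0" using w(2) by (simp add: numeral_2_eq_2)
  have "rational B" using B unfolding rational_submodule_def by simp
  moreover have "w 0 = - w 1" using sum0 by (simp add: eq_neg_iff_add_eq_0)
  ultimately have "w 0 \<in> B" using subspace_neg[OF rational_subspace w1] by simp
  then have "w 0 = 0" using AB w0 by blast
  then show "\<forall>i<(2::nat). w i = 0" using sum0 by (simp add: numeral_2_eq_2 less_Suc_eq)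
qed

lemma decomp2D:
  assumes D: "decomp W Ws 2"
  shows "Ws 0 \<inter> Ws 1 \<subseteq> {0}" "x \<in> W \<Longrightarrow> \<exists>a\<in>Ws 0. \<exists>b\<in>Ws 1. x = a + b"
proof -
  show "Ws 0 \<inter> Ws 1 \<subseteq> {0}"
  proof
    fix x assume x: "x \<in> Ws 0 \<inter> Ws 1"
    then have "- x \<in> Ws 1" using subspace_neg[OF rational_subspace[OF decomp_summand_rational[OF D]]] by simp
    then have "\<forall>i<(2::nat). (if i = 0 then x else if i = 1 then - x else 0) \<in> Ws i"
      using x by (simp add: numeral_2_eq_2 less_Suc_eq)
    then have "\<forall>i<(2::nat). (if i = 0 then x else if i = 1 then - x else 0) = 0"
      by (rule decomp_independent[OF D]) (simp add: numeral_2_eq_2)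
    from this[rule_format, of 0] show "x \<in> {0}" by simp
  qed
  show "\<exists>a\<in>Ws 0. \<exists>b\<in>Ws 1. x = a + b" if "x \<in> W"
    using component_in[OF D that, of 0] component_in[OF D that, of 1] component_sum[OF D that]
    by (simp add: numeral_2_eq_2) (metis add.commute)
qed

lemma decomp2_add_eq_0:
  assumes D: "decomp W Ws 2" and a: "a \<in> Ws 0" and b: "b \<in> Ws 1" and sum0: "a + b = 0"
  shows "a = 0" "b = 0"
proof -
  have "a = - b" using sum0 by (simp add: eq_neg_iff_add_eq_0)
  then have "a \<in> Ws 1" using subspace_neg[OF rational_subspace[OF decomp_summand_rational[OF D, of 1]] b] by simp
  then show "a = 0" using decomp2D(1)[OF D] a by blast
  then show "b = 0" using sum0 by simp
qed

lemma sum_lessThan_add: "(\<Sum>k<a + b. g k) = (\<Sum>k<a. g k) + (\<Sum>j<b. g (a + j))"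
  for g :: "nat \<Rightarrow> 'a::comm_monoid_add"
  by (induction b) (simp_all add: add.assoc)

lemma decomp_concat:
  assumes D: "decomp W Ws 2" and DA: "decomp (Ws 0) As n1" and DB: "decomp (Ws 1) Bs n2"
  shows "decomp W (\<lambda>k. if k < n1 then As k else Bs (k - n1)) (n1 + n2)"
proof (rule decompI)
  have "rational_sub (Ws 0) W" "rational_sub (Ws 1) W" using decomp_sub[OF D] by simp_all
  then show "rational_sub (if i < n1 then As i else Bs (i - n1)) W" if "i < n1 + n2" for i
    using that rational_sub_trans[OF decomp_sub[OF DA]] rational_sub_trans[OF decomp_sub[OF DB]] by auto
next
  fix v assume "v \<in> W"
  then obtain a b where ab: "a \<in> Ws 0" "b \<in> Ws 1" "v = a + b" using decomp2D(2)[OF D] by blast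
  obtain \<alpha> where \<alpha>: "\<forall>i<n1. \<alpha> i \<in> As i" "a = (\<Sum>i<n1. \<alpha> i)" using decomp_span[OF DA ab(1)] by blast
  obtain \<beta> where \<beta>: "\<forall>i<n2. \<beta> i \<in> Bs i" "b = (\<Sum>i<n2. \<beta> i)" using decomp_span[OF DB ab(2)] by blast
  define w where "w k = (if k < n1 then \<alpha> k else \<beta> (k - n1))" for k
  have "v = (\<Sum>k<n1 + n2. w k)" using ab(3) \<alpha>(2) \<beta>(2) by (simp add: sum_lessThan_add w_def)
  moreover have "\<forall>i<n1 + n2. w i \<in> (if i < n1 then As i else Bs (i - n1))"
    using \<alpha>(1) \<beta>(1) by (auto simp: w_def)
  ultimately show "\<exists>w. (\<forall>i<n1 + n2. w i \<in> (if i < n1 then As i else Bs (i - n1))) \<and> v = (\<Sum>i<n1 + n2. w i)"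
    by (intro exI[of _ w]) simp
next
  fix w assume w: "\<forall>i<n1 + n2. w i \<in> (if i < n1 then As i else Bs (i - n1))" "(\<Sum>i<n1 + n2. w i) = 0"
  have wa: "\<forall>i<n1. w i \<in> As i"
  proof (intro allI impI)
    fix i assume "i < n1"
    then show "w i \<in> As i" using w(1)[rule_format, of i] by simp
  qed
  have wb: "\<forall>j<n2. w (n1 + j) \<in> Bs j"
  proof (intro allI impI)
    fix j assume "j < n2"
    then show "w (n1 + j) \<in> Bs j" using w(1)[rule_format, of "n1 + j"] by simp
  qed
  have a: "(\<Sum>i<n1. w i) \<in> Ws 0"
    using wa decomp_summand_subset[OF DA]
    by (intro subspace_sum[OF rational_subspace[OF decomp_summand_rational[OF D, of 0]]]) auto
  have b: "(\<Sum>j<n2. w (n1 + j)) \<in> Ws 1"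
    using wb decomp_summand_subset[OF DB]
    by (intro subspace_sum[OF rational_subspace[OF decomp_summand_rational[OF D, of 1]]]) auto
  have "(\<Sum>i<n1. w i) + (\<Sum>j<n2. w (n1 + j)) = 0" using w(2) by (simp add: sum_lessThan_add)
  then have "(\<Sum>i<n1. w i) = 0" "(\<Sum>j<n2. w (n1 + j)) = 0" using decomp2_add_eq_0[OF D a b] by auto
  then have "\<forall>i<n1. w i = 0" and "\<forall>j<n2. w (n1 + j) = 0"
    using decomp_independent[OF DA wa] decomp_independent[OF DB wb] by auto
  then show "\<forall>i<n1 + n2. w i = 0"
    by (metis add_diff_inverse_nat add_less_cancel_left)
qed

lemma proper_summand:
  assumes D: "decomp W Ws 2" and i: "i < 2" and other: "Ws (1 - i) \<noteq> {0}"
  shows "Ws i \<subset> W"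
proof -
  have "1 - i < 2" by simp
  then obtain b where b: "b \<in> Ws (1 - i)" "b \<noteq> 0"
    using other rational_0[OF decomp_summand_rational[OF D]] by blast
  moreover have "Ws 0 \<inter> Ws 1 \<subseteq> {0}" using decomp2D(1)[OF D] .
  ultimately have "b \<notin> Ws i" using i by (auto simp: numeral_2_eq_2 less_Suc_eq)
  moreover have "b \<in> W" using decomp_summand_subset[OF D \<open>1 - i < 2\<close> b(1)] .
  moreover have "Ws i \<subseteq> W" using decomp_sub[OF D i] unfolding rational_submodule_def by simp
  ultimately show ?thesis by blast
qed

lemma decomp_0: "W = {0} \<Longrightarrow> decomp W Ws 0"
  by (rule decompI) auto

lemma decomp_1:
  assumes "rational W"
  shows "decomp W (\<lambda>_. W) 1"
proof (rule decompI)
  show "\<exists>w. (\<forall>i<(1::nat). w i \<in> W) \<and> v = (\<Sum>i<(1::nat). w i)" if "v \<in> W" for v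
    using that by (intro exI[of _ "\<lambda>_. v"]) simp
qed (simp_all add: rational_sub_refl[OF assms])

lemma decomp_permute:
  assumes D: "decomp V Us m" and t: "t permutes {..<m}"
  shows "decomp V (\<lambda>i. Us (t i)) m"
proof (rule decompI)
  show "rational_sub (Us (t i)) V" if "i < m" for i
    using decomp_sub[OF D] permutes_in_image[OF t] that by simp
next
  fix v assume "v \<in> V"
  then obtain w where w: "\<forall>i<m. w i \<in> Us i" "v = (\<Sum>i<m. w i)" using decomp_span[OF D] by blast
  have "(\<Sum>i<m. w i) = (\<Sum>i<m. w (t i))" using sum.permute[OF t, of w] by (simp add: o_def)
  moreover have "\<forall>i<m. w (t i) \<in> Us (t i)" using w(1) permutes_in_image[OF t] by simp
  ultimately show "\<exists>w. (\<forall>i<m. w i \<in> Us (t i)) \<and> v = (\<Sum>i<m. w i)"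
    using w(2) by (intro exI[of _ "\<lambda>i. w (t i)"]) simp
next
  fix w assume w: "\<forall>i<m. w i \<in> Us (t i)" "(\<Sum>i<m. w i) = 0"
  have "\<forall>j<m. w (inv t j) \<in> Us j"
  proof (intro allI impI)
    fix j assume "j < m"
    then have "inv t j < m" using permutes_in_image[OF permutes_inv[OF t]] by simp
    then show "w (inv t j) \<in> Us j" using w(1) permutes_inverses(1)[OF t] by metis
  qed
  moreover have "(\<Sum>j<m. w (inv t j)) = 0"
    using sum.permute[OF t, of "\<lambda>j. w (inv t j)"] w(2) permutes_inverses(2)[OF t] by (simp add: o_def)
  ultimately have "\<forall>j<m. w (inv t j) = 0" by (rule decomp_independent[OF D])
  show "\<forall>i<m. w i = 0"
  proof (intro allI impI)
    fix i assume "i < m"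
    then have "t i < m" using permutes_in_image[OF t] by simp
    then show "w i = 0" using \<open>\<forall>j<m. w (inv t j) = 0\<close> permutes_inverses(2)[OF t] by metis
  qed
qed

lemma component_permute:
  assumes D: "decomp V Us m" and t: "t permutes {..<m}" and v: "v \<in> V"
  shows "component (\<lambda>i. Us (t i)) m v = (\<lambda>i. component Us m v (t i))"
proof (rule component_eq[OF decomp_permute[OF D t] v])
  show "\<forall>i<m. component Us m v (t i) \<in> Us (t i)" using component_in[OF D v] permutes_in_image[OF t] by simp
  show "\<forall>i\<ge>m. component Us m v (t i) = 0" using permutes_not_in[OF t] component_out[OF D v] by simp
  show "v = (\<Sum>i<m. component Us m v (t i))"
    using component_sum[OF D v] sum.permute[OF t, of "component Us m v"] by (simp add: o_def)
qed

lemma decomp_tail: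
  assumes D: "decomp V Ws (Suc n)"
  shows "decomp {v \<in> V. component Ws (Suc n) v 0 = 0} (\<lambda>i. Ws (Suc i)) n"
proof (rule decompI)
  fix i assume i: "i < n"
  have "Ws (Suc i) \<subseteq> {v \<in> V. component Ws (Suc n) v 0 = 0}"
  proof
    fix w assume w: "w \<in> Ws (Suc i)"
    then have "component Ws (Suc n) w = (\<lambda>k. if k = Suc i then w else 0)"
      using component_of_summand[OF D] i by simp
    then show "w \<in> {v \<in> V. component Ws (Suc n) v 0 = 0}" using decomp_summand_subset[OF D _ w] i by simp
  qed
  then show "rational_sub (Ws (Suc i)) {v \<in> V. component Ws (Suc n) v 0 = 0}"
    using decomp_summand_rational[OF D, of "Suc i"] i unfolding rational_submodule_def by simp
next
  fix v assume v: "v \<in> {v \<in> V. component Ws (Suc n) v 0 = 0}"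
  then have "v = (\<Sum>i<n. component Ws (Suc n) v (Suc i))"
    using component_sum[OF D, of v] unfolding sum.lessThan_Suc_shift by simp
  moreover have "\<forall>i<n. component Ws (Suc n) v (Suc i) \<in> Ws (Suc i)" using component_in[OF D] v by simp
  ultimately show "\<exists>w. (\<forall>i<n. w i \<in> Ws (Suc i)) \<and> v = (\<Sum>i<n. w i)"
    by (intro exI[of _ "\<lambda>i. component Ws (Suc n) v (Suc i)"]) simp
next
  fix w assume w: "\<forall>i<n. w i \<in> Ws (Suc i)" "(\<Sum>i<n. w i) = 0"
  define w' where "w' k = (case k of 0 \<Rightarrow> 0 | Suc i \<Rightarrow> w i)" for k
  have "\<forall>k<Suc n. w' k \<in> Ws k"
  proof (intro allI impI)
    fix k assume "k < Suc n"
    then show "w' k \<in> Ws k" using w(1) rational_0[OF decomp_summand_rational[OF D]] by (cases k) (simp_all add: w'_def)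
  qed
  moreover have "(\<Sum>k<Suc n. w' k) = 0" unfolding sum.lessThan_Suc_shift using w(2) by (simp add: w'_def)
  ultimately have "\<forall>k<Suc n. w' k = 0" by (rule decomp_independent[OF D])
  then show "\<forall>i<n. w i = 0" unfolding w'_def by (metis Suc_mono old.nat.simps(5))
qed

lemma permutes_Suc_lift:
  assumes s: "s permutes {..<k}"
  shows "(\<lambda>i. case i of 0 \<Rightarrow> 0 | Suc j \<Rightarrow> Suc (s j)) permutes {..<Suc k}"
proof (rule bij_imp_permutes)
  let ?t = "\<lambda>i. case i of 0 \<Rightarrow> 0 | Suc j \<Rightarrow> Suc (s j)"
  let ?t' = "\<lambda>i. case i of 0 \<Rightarrow> 0 | Suc j \<Rightarrow> Suc (inv s j)"
  have "j < k \<Longrightarrow> s j < k" "j < k \<Longrightarrow> inv s j < k" for j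
    using permutes_in_image[OF s] permutes_in_image[OF permutes_inv[OF s]] by simp_all
  then show "bij_betw ?t {..<Suc k} {..<Suc k}"
    by (intro bij_betw_byWitness[where f' = ?t'])
      (auto simp: permutes_inverses[OF s] less_Suc_eq_0_disj)
  show "?t i = i" if "i \<notin> {..<Suc k}" for i
    using that permutes_not_in[OF s] by (cases i) simp_all
qed

context
  fixes V
  assumes V: "rational V"
begin

lemma rational_image:
  assumes g: "hom V V g"
  shows "rational_sub (g ` V) V"
proof -
  have sub: "g ` V \<subseteq> V" using homD(2)[OF g] by auto
  have ss: "subspace (g ` V)"
    unfolding subspace_def
  proof (intro conjI ballI allI)
    show "0 \<in> g ` V" using hom_0[OF V g] rational_0[OF V] by (metis image_eqI)
  next
    fix x y assume "x \<in> g ` V" "y \<in> g ` V"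
    then obtain a b where ab: "a \<in> V" "b \<in> V" "x = g a" "y = g b" by blast
    then have "x + y = g (a + b)" using linear_intoD(2)[OF homD(1)[OF g]] by simp
    then show "x + y \<in> g ` V" using subspace_add[OF rational_subspace[OF V] ab(1,2)] by simp
  next
    fix c x assume "x \<in> g ` V"
    then obtain a where a: "a \<in> V" "x = g a" by blast
    then have "smul c x = g (smul c a)" using linear_intoD(3)[OF homD(1)[OF g]] by simp
    then show "smul c x \<in> g ` V" using subspace_scale[OF rational_subspace[OF V] a(1)] by simp
  qed
  have closed: "e v \<in> g ` V \<and> f v \<in> g ` V \<and> h v \<in> g ` V" if v: "v \<in> g ` V" for v
  proof -
    obtain a where a: "a \<in> V" "v = g a" using v by blast
    then have "e v = g (e a)" "f v = g (f a)" "h v = g (h a)" using homD(3-5)[OF g] by simp_all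
    then show ?thesis using rational_closed[OF V a(1)] by simp
  qed
  have divisible: "\<exists>w\<in>g ` V. act p w = u" if p: "p \<noteq> 0" and u: "u \<in> g ` V" for p u
  proof -
    obtain a where a: "a \<in> V" "u = g a" using u by auto
    obtain w where w: "w \<in> V" "act p w = a" using rational_act_surj[OF V p a(1)] by blast
    then show ?thesis using a hom_act[OF V V g w(1)] by auto
  qed
  have "rational (g ` V)" by (rule rational_if_divisible[OF V sub ss closed divisible])
  then show ?thesis unfolding rational_submodule_def using sub by simp
qed

lemma rational_kernel:
  assumes g: "hom V V g"
  shows "rational_sub {v \<in> V. g v = 0} V"
proof -
  have sV: "subspace V" using rational_subspace[OF V] .
  have g0: "g 0 = 0" using hom_0[OF V g] .
  have ss: "subspace {v \<in> V. g v = 0}"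
    unfolding subspace_def using g0 subspace_0[OF sV] subspace_add[OF sV] subspace_scale[OF sV]
      linear_intoD(2,3)[OF homD(1)[OF g]] by simp
  have closed: "e v \<in> {v \<in> V. g v = 0} \<and> f v \<in> {v \<in> V. g v = 0} \<and> h v \<in> {v \<in> V. g v = 0}"
    if "v \<in> {v \<in> V. g v = 0}" for v
    using that homD(3-5)[OF g] rational_closed[OF V]
      linear_into_0[OF sV sl2_module_linear(2)[OF rationalD(1)[OF V]]]
      linear_into_0[OF sV sl2_module_linear(3)[OF rationalD(1)[OF V]]]
      linear_into_0[OF sV sl2_module_linear(4)[OF rationalD(1)[OF V]]] by simp
  have divisible: "\<exists>w\<in>{v \<in> V. g v = 0}. act p w = u" if p: "p \<noteq> 0" and u: "u \<in> {v \<in> V. g v = 0}" for p u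
  proof -
    obtain w where w: "w \<in> V" "act p w = u" using rational_act_surj[OF V p] u by blast
    have "act p (g w) = act p 0"
      using hom_act[OF V V g w(1), of p, symmetric] w(2) u linear_into_0[OF sV linear_into_act[OF sV rational_linear_h[OF V]]]
      by simp
    then have "g w = 0" using rational_act_inj[OF V p] homD(2)[OF g w(1)] rational_0[OF V] by blast
    then show ?thesis using w by auto
  qed
  have "rational {v \<in> V. g v = 0}" by (rule rational_if_divisible[OF V _ ss closed divisible]) auto
  then show ?thesis unfolding rational_submodule_def by auto
qed

lemma descending_chain_stabilizes:
  assumes X: "\<And>k. rational_sub (X k) V" and dec: "\<And>k. X (Suc k) \<subseteq> X k"
  shows "\<exists>N. \<forall>k\<ge>N. X k = X N"
proof -
  obtain N where N: "\<And>k. poly_rank (X N) \<le> poly_rank (X k)"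
    using ex_has_least_nat[of "\<lambda>_. True" 0 "\<lambda>k. poly_rank (X k)"] by blast
  have "X k = X N" if "N \<le> k" for k
  proof (rule ccontr)
    assume "X k \<noteq> X N"
    moreover have "X k \<subseteq> X N" using decseqD[OF decseq_SucI[of X, OF dec] that] .
    ultimately have "poly_rank (X k) < poly_rank (X N)"
      using poly_rank_less[OF V, of "X k" "X N"] X unfolding rational_submodule_def by auto
    then show False using N[of k] by simp
  qed
  then show ?thesis by blast
qed

lemma ascending_chain_stabilizes:
  assumes X: "\<And>k. rational_sub (X k) V" and inc: "\<And>k. X k \<subseteq> X (Suc k)"
  shows "\<exists>N. \<forall>k\<ge>N. X k = X N"
proof -
  have "poly_rank (X k) < Suc (poly_rank V)" for k
    using poly_rank_mono[OF V, of "X k" V] X unfolding rational_submodule_def by auto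
  then obtain N where N: "\<And>k. poly_rank (X k) \<le> poly_rank (X N)"
    using Lattices_Big.ex_has_greatest_nat[of "\<lambda>_. True" 0 "\<lambda>k. poly_rank (X k)"] by blast
  have "X k = X N" if "N \<le> k" for k
  proof (rule ccontr)
    assume "X k \<noteq> X N"
    moreover have "X N \<subseteq> X k" using incseqD[OF incseq_SucI[of X, OF inc] that] .
    ultimately have "poly_rank (X N) < poly_rank (X k)"
      using poly_rank_less[OF V, of "X N" "X k"] X unfolding rational_submodule_def by auto
    then show False using N[of k] by simp
  qed
  then show ?thesis by blast
qed

lemma power_kernels_images_stabilize:
  assumes g: "hom V V g"
  obtains N where "0 < N" "{v \<in> V. (g ^^ (N + N)) v = 0} = {v \<in> V. (g ^^ N) v = 0}"
    "(g ^^ (N + N)) ` V = (g ^^ N) ` V"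
proof -
  define K where "K k = {v \<in> V. (g ^^ k) v = 0}" for k
  define I where "I k = (g ^^ k) ` V" for k
  have K_sub: "rational_sub (K k) V" for k unfolding K_def by (rule rational_kernel[OF hom_funpow[OF g]])
  have I_sub: "rational_sub (I k) V" for k unfolding I_def by (rule rational_image[OF hom_funpow[OF g]])
  have K_inc: "K k \<subseteq> K (Suc k)" for k unfolding K_def using hom_0[OF V g] by auto
  have I_dec: "I (Suc k) \<subseteq> I k" for k
    unfolding I_def using homD(2)[OF g] by (auto simp: funpow_Suc_right simp del: funpow.simps)
  obtain N1 where N1: "\<And>k. N1 \<le> k \<Longrightarrow> K k = K N1"
    using ascending_chain_stabilizes[of K, OF K_sub K_inc] by blast
  obtain N2 where N2: "\<And>k. N2 \<le> k \<Longrightarrow> I k = I N2"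
    using descending_chain_stabilizes[of I, OF I_sub I_dec] by blast
  show thesis
    using that[of "Suc (max N1 N2)"] N1[of "Suc (max N1 N2)"] N1[of "Suc (max N1 N2) + Suc (max N1 N2)"]
      N2[of "Suc (max N1 N2)"] N2[of "Suc (max N1 N2) + Suc (max N1 N2)"]
    unfolding K_def I_def by simp
qed

lemma fitting_decomposition:
  assumes g: "hom V V g"
  obtains N where "decomp V (\<lambda>i. if i = 0 then {v \<in> V. (g ^^ N) v = 0} else (g ^^ N) ` V) 2"
    and "{v \<in> V. g v = 0} \<subseteq> {v \<in> V. (g ^^ N) v = 0}" and "(g ^^ N) ` V \<subseteq> g ` V"
proof -
  obtain N where N: "0 < N" and KN: "{v \<in> V. (g ^^ (N + N)) v = 0} = {v \<in> V. (g ^^ N) v = 0}"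
    and IN: "(g ^^ (N + N)) ` V = (g ^^ N) ` V"
    using power_kernels_images_stabilize[OF g] by blast
  have gN: "hom V V (g ^^ N)" using hom_funpow[OF g] .
  have NN: "(g ^^ (N + N)) v = (g ^^ N) ((g ^^ N) v)" for v by (simp add: funpow_add)
  have disjoint: "{v \<in> V. (g ^^ N) v = 0} \<inter> (g ^^ N) ` V \<subseteq> {0}"
  proof
    fix x assume x: "x \<in> {v \<in> V. (g ^^ N) v = 0} \<inter> (g ^^ N) ` V"
    then obtain y where y: "y \<in> V" "x = (g ^^ N) y" by auto
    then have "y \<in> {v \<in> V. (g ^^ (N + N)) v = 0}" using x NN by simp
    then show "x \<in> {0}" using y KN by simp
  qed
  have span: "\<exists>a\<in>{v \<in> V. (g ^^ N) v = 0}. \<exists>b\<in>(g ^^ N) ` V. x = a + b" if x: "x \<in> V" for x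
  proof -
    have "(g ^^ N) x \<in> (g ^^ (N + N)) ` V" using IN x by simp
    then obtain y where y: "y \<in> V" "(g ^^ N) x = (g ^^ N) ((g ^^ N) y)" unfolding NN by auto
    have y': "(g ^^ N) y \<in> V" using homD(2)[OF gN y(1)] .
    have "(g ^^ N) (x - (g ^^ N) y) = 0"
      using linear_into_diff[OF rational_subspace[OF V] homD(1)[OF gN] x y'] y(2) by simp
    then show ?thesis using subspace_diff[OF rational_subspace[OF V] x y'] y(1)
      by (intro bexI[of _ "x - (g ^^ N) y"] bexI[of _ "(g ^^ N) y"]) simp_all
  qed
  obtain M where M: "N = Suc M" using N by (cases N) auto
  have "{v \<in> V. g v = 0} \<subseteq> {v \<in> V. (g ^^ N) v = 0}"
    using hom_0[OF V hom_funpow[OF g]] by (auto simp: M funpow_Suc_right simp del: funpow.simps)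
  moreover have "(g ^^ N) ` V \<subseteq> g ` V"
    using homD(2)[OF hom_funpow[OF g]] by (auto simp: M)
  ultimately show thesis
    using that decomp2I[OF rational_kernel[OF gN] rational_image[OF gN] disjoint span] by blast
qed

end

abbreviation indec :: "'v set \<Rightarrow> bool" where
  "indec W \<equiv> indecomposable smul W e f h"

lemma indecD:
  assumes "indec W"
  shows "rational W" "W \<noteq> {0}" "decomp W Ws 2 \<Longrightarrow> Ws 0 = {0} \<or> Ws 1 = {0}"
  using assms unfolding indecomposable_def by auto

lemma indec_nonzero_elem:
  assumes "indec W"
  obtains v where "v \<in> W" "v \<noteq> 0"
  using indecD(1,2)[OF assms] rational_0 by blast

lemma indec_endo_bij_or_nilpotent:
  assumes W: "indec W" and g: "hom W W g"
  shows "bij_betw g W W \<or> (\<exists>N. \<forall>v\<in>W. (g ^^ N) v = 0)"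
proof -
  have rW: "rational W" using indecD(1)[OF W] .
  obtain N where D: "decomp W (\<lambda>i. if i = 0 then {v \<in> W. (g ^^ N) v = 0} else (g ^^ N) ` W) 2"
    and ker: "{v \<in> W. g v = 0} \<subseteq> {v \<in> W. (g ^^ N) v = 0}" and img: "(g ^^ N) ` W \<subseteq> g ` W"
    using fitting_decomposition[OF rW g] by blast
  consider "{v \<in> W. (g ^^ N) v = 0} = {0}" | "(g ^^ N) ` W = {0}" using indecD(3)[OF W D] by auto
  then show ?thesis
  proof cases
    case 1
    then have "inj_on g W" using ker by (intro linear_into_inj_on[OF rational_subspace[OF rW] homD(1)[OF g]]) blast
    moreover have "W \<subseteq> g ` W"
    proof
      fix x assume "x \<in> W"
      then have "\<exists>a\<in>{v \<in> W. (g ^^ N) v = 0}. \<exists>b\<in>(g ^^ N) ` W. x = a + b"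
        using decomp2D(2)[OF D] by simp
      then obtain a b where "a \<in> {v \<in> W. (g ^^ N) v = 0}" "b \<in> (g ^^ N) ` W" "x = a + b"
        by blast
      then show "x \<in> g ` W" using 1 img by auto
    qed
    ultimately show ?thesis using homD(2)[OF g] by (auto simp: bij_betw_def)
  next
    case 2
    then show ?thesis by blast
  qed
qed

lemma bij_if_complement_nilpotent:
  assumes W: "indec W" and t: "hom W W t" and r: "hom W W r"
    and sum: "\<And>v. v \<in> W \<Longrightarrow> t v + r v = v" and nil: "\<And>v. v \<in> W \<Longrightarrow> (t ^^ N) v = 0"
  shows "bij_betw r W W"
proof -
  have r0: "x = 0" if "x \<in> W" "r x = 0" for x
  proof -
    have "t x = x" using sum[OF that(1)] that(2) by simp
    then have "(t ^^ N) x = x" by (induction N) simp_all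
    then show ?thesis using nil[OF that(1)] by simp
  qed
  have "(r ^^ k) x = 0 \<Longrightarrow> x \<in> W \<Longrightarrow> x = 0" for k x
  proof (induction k arbitrary: x)
    case (Suc k)
    have "(r ^^ k) (r x) = 0" using Suc.prems(1) by (simp add: funpow_Suc_right del: funpow.simps)
    then have "r x = 0" using Suc.IH homD(2)[OF r Suc.prems(2)] by blast
    then show ?case using r0 Suc.prems(2) by blast
  qed simp
  moreover obtain v where "v \<in> W" "v \<noteq> 0" using indec_nonzero_elem[OF W] .
  ultimately have "\<not> (\<exists>N. \<forall>v\<in>W. (r ^^ N) v = 0)" by blast
  then show ?thesis using indec_endo_bij_or_nilpotent[OF W r] by blast
qed

lemma local_endomorphism_ring_if_indec:
  assumes W: "indec W"
  shows "local_endomorphism_ring smul W e f h"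
  unfolding local_endomorphism_ring_def
proof (intro conjI allI impI)
  show "W \<noteq> {0}" using indecD(2)[OF W] .
  have rW: "rational W" using indecD(1)[OF W] .
  fix \<phi> \<psi> assume "hom W W \<phi> \<and> hom W W \<psi> \<and> \<not> bij_betw \<phi> W W \<and> \<not> bij_betw \<psi> W W"
  then have \<phi>: "hom W W \<phi>" "\<not> bij_betw \<phi> W W" and \<psi>: "hom W W \<psi>" "\<not> bij_betw \<psi> W W" by auto
  show "\<not> bij_betw (\<lambda>v. \<phi> v + \<psi> v) W W"
  proof
    assume c: "bij_betw (\<lambda>v. \<phi> v + \<psi> v) W W"
    define a where "a = the_inv_into W (\<lambda>v. \<phi> v + \<psi> v)"
    have a: "hom W W a" using hom_the_inv_into[OF rW hom_add[OF \<phi>(1) \<psi>(1) rW] c] unfolding a_def .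
    have ca: "\<phi> (a v) + \<psi> (a v) = v" if "v \<in> W" for v
      using f_the_inv_into_f_bij_betw[OF c] that unfolding a_def by simp
    have ac: "a (\<phi> v + \<psi> v) = v" if "v \<in> W" for v
      using the_inv_into_f_f[OF bij_betw_imp_inj_on[OF c] that] unfolding a_def .
    have t: "hom W W (\<lambda>v. a (\<phi> v))" and r: "hom W W (\<lambda>v. a (\<psi> v))"
      using hom_comp[OF \<phi>(1) a] hom_comp[OF \<psi>(1) a] .
    have sum: "a (\<phi> v) + a (\<psi> v) = v" if "v \<in> W" for v
      using linear_intoD(2)[OF homD(1)[OF a] homD(2)[OF \<phi>(1) that] homD(2)[OF \<psi>(1) that]] ac[OF that]
      by simp
    have unit: "bij_betw k W W" if "hom W W k" "bij_betw (\<lambda>v. a (k v)) W W" for k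
      using bij_betw_trans[OF that(2) c] ca homD(2)[OF that(1)] by (simp add: comp_def cong: bij_betw_cong)
    have "\<not> bij_betw (\<lambda>v. a (\<phi> v)) W W" using unit[OF \<phi>(1)] \<phi>(2) by blast
    then obtain N where "\<forall>v\<in>W. ((\<lambda>v. a (\<phi> v)) ^^ N) v = 0"
      using indec_endo_bij_or_nilpotent[OF W t] by blast
    then have "bij_betw (\<lambda>v. a (\<psi> v)) W W" using bij_if_complement_nilpotent[OF W t r sum] by blast
    then show False using unit[OF \<psi>(1)] \<psi>(2) by blast
  qed
qed

lemma local_endomorphism_ring_sum_not_bij:
  assumes L: "local_endomorphism_ring smul W e f h" and W: "rational W" and J: "finite J"
    and g: "\<And>j. j \<in> J \<Longrightarrow> hom W W (g j) \<and> \<not> bij_betw (g j) W W"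
  shows "\<not> bij_betw (\<lambda>v. \<Sum>j\<in>J. g j v) W W"
  using J g
proof (induction J rule: finite_induct)
  case empty
  obtain v where "v \<in> W" "v \<noteq> 0" using L rational_0[OF W] unfolding local_endomorphism_ring_def by blast
  then show ?case using rational_0[OF W] by (auto simp: bij_betw_def inj_on_def)
next
  case (insert a J)
  have "hom W W (\<lambda>v. \<Sum>j\<in>J. g j v)" using hom_sum[OF W insert.hyps(1)] insert.prems by blast
  then show ?case using L insert unfolding local_endomorphism_ring_def by simp
qed

lemma decomposition_exists:
  "rational W \<Longrightarrow> \<exists>Ws n. decomp W Ws n \<and> (\<forall>i<n. indec (Ws i))"
proof (induction "poly_rank W" arbitrary: W rule: less_induct)
  case less
  consider "W = {0}" | "indec W" | Ws where "decomp W Ws 2" "Ws 0 \<noteq> {0}" "Ws 1 \<noteq> {0}"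
    using less.prems unfolding indecomposable_def by blast
  then show ?case
  proof cases
    case 1
    then show ?thesis by (intro exI[of _ "\<lambda>_. {0}"] exI[of _ 0]) (simp add: decomp_0)
  next
    case 2
    then show ?thesis using decomp_1[OF less.prems] by (intro exI[of _ "\<lambda>_. W"] exI[of _ 1]) simp
  next
    case 3
    have "Ws 0 \<subset> W" "Ws 1 \<subset> W" using proper_summand[OF 3(1), of 0] proper_summand[OF 3(1), of 1] 3(2,3) by simp_all
    moreover have A: "rational (Ws 0)" and B: "rational (Ws 1)" using decomp_summand_rational[OF 3(1)] by simp_all
    ultimately have "poly_rank (Ws 0) < poly_rank W" "poly_rank (Ws 1) < poly_rank W"
      using poly_rank_less[OF less.prems A] poly_rank_less[OF less.prems B] by simp_all
    then obtain As n1 Bs n2 where "decomp (Ws 0) As n1" "\<forall>i<n1. indec (As i)"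
      and "decomp (Ws 1) Bs n2" "\<forall>i<n2. indec (Bs i)"
      using less.hyps[OF _ A] less.hyps[OF _ B] by blast
    then show ?thesis
      using decomp_concat[OF 3(1)]
      by (intro exI[of _ "\<lambda>k. if k < n1 then As k else Bs (k - n1)"] exI[of _ "n1 + n2"]) simp
  qed
qed

abbreviation iso :: "'v set \<Rightarrow> 'v set \<Rightarrow> bool" where
  "iso W U \<equiv> sl2_iso smul W U e f h"

lemma indec_summands_of_zero:
  assumes "V \<subseteq> {0}" and "decomp V Us m" and "\<forall>j<m. indec (Us j)"
  shows "m = 0"
proof (rule ccontr)
  assume "m \<noteq> 0"
  then have "Us 0 \<subseteq> V" "indec (Us 0)" using decomp_summand_subset[OF assms(2)] assms(3) by auto
  then show False using assms(1) indecD(2) rational_0[OF indecD(1)] by blast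
qed

text \<open>The endomorphism \<open>k \<circ> (r \<circ> k)\<inverse> \<circ> r\<close> of \<open>B\<close> fixes the image of \<open>k\<close>, so it is not
  nilpotent; hence it is bijective and \<open>k\<close> is onto.\<close>

lemma bij_if_composite_bij:
  assumes A: "indec A" and B: "indec B" and k: "hom A B k" and r: "hom B A r"
    and rk: "bij_betw (\<lambda>a. r (k a)) A A"
  shows "bij_betw k A B"
proof -
  have rA: "rational A" using indecD(1)[OF A] .
  define a where "a = the_inv_into A (\<lambda>a. r (k a))"
  have a: "hom A A a" unfolding a_def by (rule hom_the_inv_into[OF rA hom_comp[OF k r] rk])
  have a_rk: "a (r (k x)) = x" if "x \<in> A" for x
    unfolding a_def using the_inv_into_f_f[OF bij_betw_imp_inj_on[OF rk] that] .
  have inj: "inj_on k A" by (rule inj_onI) (metis a_rk)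
  define \<epsilon> where "\<epsilon> b = k (a (r b))" for b
  have \<epsilon>: "hom B B \<epsilon>" unfolding \<epsilon>_def using hom_comp[OF hom_comp[OF r a] k] .
  have \<epsilon>_k: "(\<epsilon> ^^ N) (k x) = k x" if "x \<in> A" for x N
    by (induction N) (simp_all add: \<epsilon>_def a_rk[OF that])
  obtain x where x: "x \<in> A" "x \<noteq> 0" using indec_nonzero_elem[OF A] .
  have "k x \<noteq> 0"
    using inj_onD[OF inj, of x 0] x rational_0[OF rA] linear_into_0[OF rational_subspace[OF rA] homD(1)[OF k]]
    by auto
  then have "\<not> (\<exists>N. \<forall>v\<in>B. (\<epsilon> ^^ N) v = 0)" using \<epsilon>_k[OF x(1)] homD(2)[OF k x(1)] by metis
  then have \<epsilon>_bij: "bij_betw \<epsilon> B B" using indec_endo_bij_or_nilpotent[OF B \<epsilon>] by blast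
  have "B \<subseteq> k ` A"
  proof
    fix b assume "b \<in> B"
    then obtain b' where "b' \<in> B" "b = k (a (r b'))" using bij_betw_imp_surj_on[OF \<epsilon>_bij] \<epsilon>_def by auto
    then show "b \<in> k ` A" using homD(2)[OF a] homD(2)[OF r] by blast
  qed
  then show ?thesis using inj homD(2)[OF k] by (auto simp: bij_betw_def)
qed

context
  fixes V V' A B \<Phi> p q
  assumes V: "rational V" and V': "rational V'" and \<Phi>: "hom V V' \<Phi>" and \<Phi>_bij: "bij_betw \<Phi> V V'"
    and A: "A \<subseteq> V" and p: "hom V V p" and p_A: "\<And>v. v \<in> V \<Longrightarrow> p v \<in> A"
    and B: "B \<subseteq> V'" and q: "hom V' V' q" and q_B: "\<And>u. u \<in> V' \<Longrightarrow> q u \<in> B"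
    and q_id: "\<And>b. b \<in> B \<Longrightarrow> q b = b"
    and k_bij: "bij_betw (\<lambda>a. q (\<Phi> a)) A B"
    and t_bij: "bij_betw (\<lambda>a. p (the_inv_into V \<Phi> (q (\<Phi> a)))) A A"
begin

private abbreviation (input) "\<Psi> \<equiv> the_inv_into V \<Phi>"

private lemma \<Psi>: "hom V' V \<Psi>"
  using hom_the_inv_into[OF V \<Phi> \<Phi>_bij] .

private lemma \<Phi>_\<Psi>: "u \<in> V' \<Longrightarrow> \<Phi> (\<Psi> u) = u"
  using f_the_inv_into_f_bij_betw[OF \<Phi>_bij] .

private lemma \<Psi>_\<Phi>: "v \<in> V \<Longrightarrow> \<Psi> (\<Phi> v) = v"
  using the_inv_into_f_f[OF bij_betw_imp_inj_on[OF \<Phi>_bij]] .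

private lemma zeros: "\<Phi> 0 = 0" "\<Psi> 0 = 0" "p 0 = 0" "q 0 = 0"
  using linear_into_0[OF rational_subspace[OF V] homD(1)[OF \<Phi>]]
    linear_into_0[OF rational_subspace[OF V'] homD(1)[OF \<Psi>]]
    hom_0[OF V p] hom_0[OF V' q] by auto

lemma complement_map_hom: "hom {v \<in> V. p v = 0} {u \<in> V'. q u = 0} (\<lambda>v. \<Phi> v - q (\<Phi> v))"
proof (rule hom_restrict[OF hom_diff[OF \<Phi> hom_comp[OF \<Phi> q] V']])
  fix v assume "v \<in> {v \<in> V. p v = 0}"
  then have "\<Phi> v \<in> V'" "q (\<Phi> v) \<in> B" using homD(2)[OF \<Phi>] q_B by auto
  then show "\<Phi> v - q (\<Phi> v) \<in> {u \<in> V'. q u = 0}"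
    using linear_into_diff[OF rational_subspace[OF V'] homD(1)[OF q]] q_id B subspace_diff[OF rational_subspace[OF V']]
    by auto
qed auto

lemma complement_map_inj: "inj_on (\<lambda>v. \<Phi> v - q (\<Phi> v)) {v \<in> V. p v = 0}"
proof (rule linear_into_inj_on[OF rational_subspace homD(1)[OF complement_map_hom]])
  show "rational {v \<in> V. p v = 0}" using rational_kernel[OF V p] unfolding rational_submodule_def by simp
  fix x assume x: "x \<in> {v \<in> V. p v = 0}" "\<Phi> x - q (\<Phi> x) = 0"
  have "q (\<Phi> x) \<in> B" using x(1) q_B homD(2)[OF \<Phi>] by simp
  then obtain y where y: "y \<in> A" "q (\<Phi> y) = q (\<Phi> x)" using bij_betw_imp_surj_on[OF k_bij] by force
  then have "x = \<Psi> (q (\<Phi> y))" using x \<Psi>_\<Phi> by simp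
  then have "p (\<Psi> (q (\<Phi> y))) = p (\<Psi> (q (\<Phi> 0)))" using x zeros by simp
  moreover have "0 \<in> A" using p_A[OF rational_0[OF V]] zeros(3) by simp
  ultimately have "y = 0" using inj_onD[OF bij_betw_imp_inj_on[OF t_bij]] y(1) by blast
  then show "x = 0" using \<open>x = \<Psi> (q (\<Phi> y))\<close> zeros by simp
qed

lemma complement_map_surj: "{u \<in> V'. q u = 0} \<subseteq> (\<lambda>v. \<Phi> v - q (\<Phi> v)) ` {v \<in> V. p v = 0}"
proof
  fix u assume u: "u \<in> {u \<in> V'. q u = 0}"
  define v where "v = \<Psi> u"
  have v: "v \<in> V" unfolding v_def using homD(2)[OF \<Psi>] u by simp
  obtain y where y: "y \<in> A" "p (\<Psi> (q (\<Phi> y))) = p v" using bij_betw_imp_surj_on[OF t_bij] p_A[OF v] by force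
  define b where "b = q (\<Phi> y)"
  have b: "b \<in> B" "b \<in> V'" unfolding b_def using q_B homD(2)[OF \<Phi>] y(1) A B by auto
  define x where "x = v - \<Psi> b"
  have \<Psi>b: "\<Psi> b \<in> V" using homD(2)[OF \<Psi> b(2)] .
  have x: "x \<in> V" unfolding x_def using subspace_diff[OF rational_subspace[OF V] v \<Psi>b] .
  have "p x = 0"
    unfolding x_def using linear_into_diff[OF rational_subspace[OF V] homD(1)[OF p] v \<Psi>b] y(2) b_def by simp
  moreover have \<Phi>x: "\<Phi> x = u - b"
    unfolding x_def v_def using linear_into_diff[OF rational_subspace[OF V] homD(1)[OF \<Phi>] _ \<Psi>b] homD(2)[OF \<Psi>] u b(2) \<Phi>_\<Psi>
    by simp
  moreover have "q (\<Phi> x) = - b"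
    using \<Phi>x linear_into_diff[OF rational_subspace[OF V'] homD(1)[OF q]] u b q_id by simp
  ultimately show "u \<in> (\<lambda>v. \<Phi> v - q (\<Phi> v)) ` {v \<in> V. p v = 0}" using x by force
qed

lemma complement_iso: "iso {v \<in> V. p v = 0} {u \<in> V'. q u = 0}"
  unfolding sl2_iso_def bij_betw_def
  using complement_map_hom complement_map_inj complement_map_surj homD(2)[OF complement_map_hom] by blast

end

lemma exists_summand_automorphism:
  assumes V: "rational V" and V': "rational V'" and \<Phi>: "hom V V' \<Phi>" "bij_betw \<Phi> V V'"
    and DW: "decomp V Ws (Suc n)" and W0: "indec (Ws 0)" and DU: "decomp V' Us m"
  shows "\<exists>j<m. bij_betw (\<lambda>w. component Ws (Suc n) (the_inv_into V \<Phi> (component Us m (\<Phi> w) j)) 0)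
      (Ws 0) (Ws 0)"
proof -
  let ?\<Psi> = "the_inv_into V \<Phi>"
  define \<theta> where "\<theta> j w = component Ws (Suc n) (?\<Psi> (component Us m (\<Phi> w) j)) 0" for j w
  have \<Psi>: "hom V' V ?\<Psi>" using hom_the_inv_into[OF V \<Phi>] .
  have W0V: "Ws 0 \<subseteq> V" using decomp_summand_subset[OF DW] by blast
  have p0: "hom V (Ws 0) (\<lambda>v. component Ws (Suc n) v 0)" using hom_component[OF DW V] by simp
  have qj: "hom V' V' (\<lambda>u. component Us m u j)" if "j < m" for j
    using hom_subset_codomain[OF hom_component[OF DU V' that]] decomp_summand_subset[OF DU that] by blast
  have \<theta>: "hom (Ws 0) (Ws 0) (\<theta> j)" if "j < m" for j
    unfolding \<theta>_def by (rule hom_comp[OF hom_comp[OF hom_comp[OF hom_subset_domain[OF \<Phi>(1) W0V] qj[OF that]] \<Psi>] p0])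
  have "(\<Sum>j<m. \<theta> j w) = w" if w: "w \<in> Ws 0" for w
  proof -
    have \<Phi>w: "\<Phi> w \<in> V'" using homD(2)[OF \<Phi>(1)] w W0V by blast
    have comp_V': "component Us m (\<Phi> w) j \<in> V'" if "j < m" for j
      using decomp_summand_subset[OF DU that component_in[OF DU \<Phi>w that]] .
    have "(\<Sum>j<m. \<theta> j w) = component Ws (Suc n) (\<Sum>j<m. ?\<Psi> (component Us m (\<Phi> w) j)) 0"
      unfolding \<theta>_def using homD(2)[OF \<Psi> comp_V']
      by (intro linear_into_sum[OF rational_subspace[OF V] homD(1)[OF hom_subset_codomain[OF p0 W0V]], symmetric])
        simp
    also have "(\<Sum>j<m. ?\<Psi> (component Us m (\<Phi> w) j)) = ?\<Psi> (\<Phi> w)"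
      using linear_into_sum[OF rational_subspace[OF V'] homD(1)[OF \<Psi>], of "{..<m}" "component Us m (\<Phi> w)"]
        comp_V' component_sum[OF DU \<Phi>w] by simp
    also have "?\<Psi> (\<Phi> w) = w"
      using the_inv_into_f_f[OF bij_betw_imp_inj_on[OF \<Phi>(2)]] w W0V by blast
    also have "component Ws (Suc n) w 0 = w" using component_of_summand[OF DW _ w] by simp
    finally show ?thesis .
  qed
  then have "bij_betw (\<lambda>w. \<Sum>j<m. \<theta> j w) (Ws 0) (Ws 0)"
    by (simp add: bij_betw_id[unfolded id_def] cong: bij_betw_cong)
  then show ?thesis
    using local_endomorphism_ring_sum_not_bij[OF local_endomorphism_ring_if_indec[OF W0] indecD(1)[OF W0],
        of "{..<m}" \<theta>] \<theta> unfolding \<theta>_def by blast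
qed

lemma rational_component_kernel:
  assumes D: "decomp V Ws n" and V: "rational V" and j: "j < n"
  shows "rational {v \<in> V. component Ws n v j = 0}"
proof -
  have "Ws j \<subseteq> V" using decomp_summand_subset[OF D j] by blast
  then show ?thesis
    using rational_kernel[OF V hom_subset_codomain[OF hom_component[OF D V j]]]
    unfolding rational_submodule_def by blast
qed

lemma summand_exchange:
  assumes V: "rational V" and V': "rational V'" and \<Phi>: "hom V V' \<Phi>" "bij_betw \<Phi> V V'"
    and DW: "decomp V Ws (Suc n)" "indec (Ws 0)" and DU: "decomp V' Us (Suc m)" "indec (Us 0)"
    and t: "bij_betw (\<lambda>w. component Ws (Suc n) (the_inv_into V \<Phi> (component Us (Suc m) (\<Phi> w) 0)) 0)
      (Ws 0) (Ws 0)"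
  shows "iso (Ws 0) (Us 0)"
    and "iso {v \<in> V. component Ws (Suc n) v 0 = 0} {u \<in> V'. component Us (Suc m) u 0 = 0}"
proof -
  let ?p = "\<lambda>v. component Ws (Suc n) v 0" and ?q = "\<lambda>u. component Us (Suc m) u 0"
  have A: "Ws 0 \<subseteq> V" and B: "Us 0 \<subseteq> V'"
    using decomp_summand_subset[OF DW(1)] decomp_summand_subset[OF DU(1)] by blast+
  have p: "hom V (Ws 0) ?p" and q: "hom V' (Us 0) ?q"
    using hom_component[OF DW(1) V] hom_component[OF DU(1) V'] by simp_all
  have q_id: "?q b = b" if "b \<in> Us 0" for b using component_of_summand[OF DU(1) _ that] by simp
  have k: "hom (Ws 0) (Us 0) (\<lambda>a. ?q (\<Phi> a))"
    using hom_comp[OF hom_subset_domain[OF \<Phi>(1) A] q] .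
  have r: "hom (Us 0) (Ws 0) (\<lambda>b. ?p (the_inv_into V \<Phi> b))"
    using hom_comp[OF hom_subset_domain[OF hom_the_inv_into[OF V \<Phi>] B] p] .
  have k_bij: "bij_betw (\<lambda>a. ?q (\<Phi> a)) (Ws 0) (Us 0)"
    using bij_if_composite_bij[OF DW(2) DU(2) k r] t by simp
  then show "iso (Ws 0) (Us 0)" unfolding sl2_iso_def using k by blast
  show "iso {v \<in> V. ?p v = 0} {u \<in> V'. ?q u = 0}"
    using complement_iso[OF V V' \<Phi> A hom_subset_codomain[OF p A] homD(2)[OF p]
        B hom_subset_codomain[OF q B] homD(2)[OF q] q_id k_bij t] .
qed

lemma exists_summand_permutation:
  assumes V: "rational V" and V': "rational V'" and \<Phi>: "hom V V' \<Phi>" "bij_betw \<Phi> V V'"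
    and DW: "decomp V Ws (Suc n)" and W0: "indec (Ws 0)" and DU: "decomp V' Us m"
  obtains \<tau> where "\<tau> permutes {..<m}" and "0 < m"
    and "bij_betw (\<lambda>w. component Ws (Suc n) (the_inv_into V \<Phi> (component (\<lambda>i. Us (\<tau> i)) m (\<Phi> w) 0)) 0)
      (Ws 0) (Ws 0)"
proof -
  obtain j where j: "j < m"
    and bij: "bij_betw (\<lambda>w. component Ws (Suc n) (the_inv_into V \<Phi> (component Us m (\<Phi> w) j)) 0) (Ws 0) (Ws 0)"
    using exists_summand_automorphism[OF V V' \<Phi> DW W0 DU] by blast
  define \<tau> where "\<tau> = Transposition.transpose 0 j"
  have \<tau>: "\<tau> permutes {..<m}" unfolding \<tau>_def using j by (intro permutes_swap_id) auto
  have "component (\<lambda>i. Us (\<tau> i)) m (\<Phi> w) 0 = component Us m (\<Phi> w) j" if "w \<in> Ws 0" for w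
    using component_permute[OF DU \<tau>] homD(2)[OF \<Phi>(1)] decomp_summand_subset[OF DW _ that]
    unfolding \<tau>_def by simp
  then show thesis using that[OF \<tau>] j bij by (simp cong: bij_betw_cong)
qed

text \<open>Stated for an isomorphism \<open>\<Phi> : V \<rightarrow> V'\<close> rather than for a single module, so that the
  induction can pass to the complements of the exchanged summands.\<close>

lemma krull_schmidt:
  "rational V \<Longrightarrow> rational V' \<Longrightarrow> hom V V' \<Phi> \<Longrightarrow> bij_betw \<Phi> V V' \<Longrightarrow>
    decomp V Ws n \<Longrightarrow> (\<forall>i<n. indec (Ws i)) \<Longrightarrow> decomp V' Us m \<Longrightarrow> (\<forall>j<m. indec (Us j)) \<Longrightarrow>
    n = m \<and> (\<exists>\<sigma>. \<sigma> permutes {..<n} \<and> (\<forall>i<n. iso (Ws i) (Us (\<sigma> i))))"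
proof (induction n arbitrary: V V' \<Phi> Ws Us m)
  case 0
  have "V \<subseteq> {0}" using decomp_span[OF "0.prems"(5)] by auto
  moreover have "V' = \<Phi> ` V" using bij_betw_imp_surj_on[OF "0.prems"(4)] by simp
  moreover have "\<Phi> 0 = 0" using linear_into_0[OF rational_subspace[OF "0.prems"(1)] homD(1)[OF "0.prems"(3)]] .
  ultimately have "V' \<subseteq> {0}" by auto
  then have "m = 0" using indec_summands_of_zero "0.prems"(7,8) by blast
  then show ?case by (intro conjI exI[of _ id]) (simp_all add: id_def)
next
  case (Suc n)
  note V = Suc.prems(1) and V' = Suc.prems(2) and \<Phi> = Suc.prems(3,4)
    and DW = Suc.prems(5) and IW = Suc.prems(6) and DU = Suc.prems(7) and IU = Suc.prems(8)
  obtain \<tau> where \<tau>: "\<tau> permutes {..<m}" and "0 < m"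
    and t: "bij_betw (\<lambda>w. component Ws (Suc n) (the_inv_into V \<Phi> (component (\<lambda>i. Us (\<tau> i)) m (\<Phi> w) 0)) 0)
      (Ws 0) (Ws 0)"
    by (rule exists_summand_permutation[OF V V' \<Phi> DW IW[rule_format, OF zero_less_Suc] DU])
  then obtain m' where m: "m = Suc m'" by (cases m) auto
  define Us' where "Us' i = Us (\<tau> i)" for i
  have DU': "decomp V' Us' (Suc m')" using decomp_permute[OF DU \<tau>] m unfolding Us'_def by simp
  have IU': "indec (Us' i)" if "i < Suc m'" for i
    using IU permutes_in_image[OF \<tau>] that m unfolding Us'_def by simp
  have t': "bij_betw (\<lambda>w. component Ws (Suc n) (the_inv_into V \<Phi> (component Us' (Suc m') (\<Phi> w) 0)) 0)
      (Ws 0) (Ws 0)"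
    using t m unfolding Us'_def[abs_def] by simp
  note exchange = summand_exchange[OF V V' \<Phi> DW IW[rule_format, OF zero_less_Suc] DU' IU'[OF zero_less_Suc] t']
  let ?K = "{v \<in> V. component Ws (Suc n) v 0 = 0}" and ?U = "{u \<in> V'. component Us' (Suc m') u 0 = 0}"
  obtain l where l: "hom ?K ?U l" "bij_betw l ?K ?U" using exchange(2) unfolding sl2_iso_def by blast
  have "rational ?K" "rational ?U"
    using rational_component_kernel[OF DW V] rational_component_kernel[OF DU' V'] by simp_all
  then obtain s where "n = m'" and s: "s permutes {..<n}" "\<forall>i<n. iso (Ws (Suc i)) (Us' (Suc (s i)))"
    using Suc.IH[OF _ _ l decomp_tail[OF DW] _ decomp_tail[OF DU']] IW IU' by auto
  define \<sigma> where "\<sigma> = \<tau> \<circ> (\<lambda>i. case i of 0 \<Rightarrow> 0 | Suc k \<Rightarrow> Suc (s k))"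
  have "\<sigma> permutes {..<Suc n}"
    unfolding \<sigma>_def using permutes_compose[OF permutes_Suc_lift[OF s(1)]] \<tau> m \<open>n = m'\<close> by simp
  moreover have "iso (Ws i) (Us (\<sigma> i))" if "i < Suc n" for i
    using exchange(1) s(2) that unfolding \<sigma>_def Us'_def by (cases i) auto
  ultimately show ?case using m \<open>n = m'\<close> by blast
qed

end

theorem theorem6p5:
  fixes smul :: "complex \<Rightarrow> 'v::ab_group_add \<Rightarrow> 'v"
    and V :: "'v set" and e f h :: "'v \<Rightarrow> 'v"
  assumes "vector_space smul"
    and "rational_module smul V e f h"
  shows "(\<exists>Vs n. jordan_hoelder_filtration smul V e f h Vs n)
     \<and> (\<exists>Ws n. direct_sum_decomp smul V e f h Ws n \<and>
          (\<forall>i<n. indecomposable smul (Ws i) e f h \<and>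
                 local_endomorphism_ring smul (Ws i) e f h))
     \<and> (\<forall>Ws n Us m.
          direct_sum_decomp smul V e f h Ws n \<and> (\<forall>i<n. indecomposable smul (Ws i) e f h) \<and>
          direct_sum_decomp smul V e f h Us m \<and> (\<forall>j<m. indecomposable smul (Us j) e f h)
          \<longrightarrow> n = m \<and> (\<exists>\<sigma>. \<sigma> permutes {..<n} \<and>
                 (\<forall>i<n. sl2_iso smul (Ws i) (Us (\<sigma> i)) e f h)))"
proof -
  interpret sl2_operators smul e f h by (rule sl2_operators.intro[OF assms(1)])
  note V = assms(2)
  obtain Ws n where "decomp V Ws n" "\<forall>i<n. indec (Ws i)" using decomposition_exists[OF V] by blast
  then have "\<exists>Ws n. decomp V Ws n \<and> (\<forall>i<n. indec (Ws i) \<and> local_endomorphism_ring smul (Ws i) e f h)"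
    using local_endomorphism_ring_if_indec by blast
  moreover have "n = m \<and> (\<exists>\<sigma>. \<sigma> permutes {..<n} \<and> (\<forall>i<n. iso (Ws i) (Us (\<sigma> i))))"
    if "decomp V Ws n" "\<forall>i<n. indec (Ws i)" "decomp V Us m" "\<forall>j<m. indec (Us j)" for Ws n Us m
    using krull_schmidt[OF V V hom_id bij_betw_id[unfolded id_def] that] .
  ultimately show ?thesis using jordan_hoelder_filtration_exists[OF V] by blast
qed

end
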